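(* Let $\mathcal C$ be an $R$-coring satisfying the left $\alpha$-condition, and suppose $\mathcal C=\bigoplus_{i\in I}C_i$ as left $\mathcal C$-comodules with each $C_i$ finitely generated (as a left $R$-module). Then $\mathrm{Rat}^{\mathcal C}({}^*\mathcal C)$ is dense in ${}^*\mathcal C$ in the finite topology, and equivalently, $\mathrm{Rat}^{\mathcal C}$ is an exact functor.
   Context: An $R$-coring is a triple $(\mathcal C,\Delta,\varepsilon)$ with $\mathcal C$ an $R$-bimodule and $\Delta:\mathcal C\to\mathcal C\otimes_R\mathcal C$, $\varepsilon:\mathcal C\to R$ coassociative and counital $R$-bimodule maps; write $\Delta(c)=c_{(1)}\otimes_R c_{(2)}$. ${}^*\mathcal C={}_R\mathrm{Hom}(\mathcal C,R)$ is a ring with product $(f\#g)(c)=g(c_{(1)}f(c_{(2)}))$. $\mathcal C$ satisfies the left $\alpha$-condition if it is locally projective as a left $R$-module; then right $\mathcal C$-comodules form a full subcategory of right ${}^*\mathcal C$-modules (a comodule $N$, $n\mapsto n_{[0]}\otimes n_{[1]}$, acts by $n\cdot f=n_{[0]}f(n_{[1]})$). For a right ${}^*\mathcal C$-module $M$, $\mathrm{Rat}^{\mathcal C}(M)$ is the set of $m\in M$ for which there is $\sum_i m_i\otimes c_i\in M\otimes_R\mathcal C$ with $m\cdot f=\sum_i m_if(c_i)$ for all $f\in{}^*\mathcal C$; $\mathrm{Rat}^{\mathcal C}$ is a left exact functor from right ${}^*\mathcal C$-modules to right $\mathcal C$-comodules. Left $\mathcal C$-comodules are left $R$-modules with coassociative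 counital coactions $m\mapsto m_{[-1]}\otimes m_{[0]}\in\mathcal C\otimes_R M$. The finite topology on ${}^*\mathcal C$ has basic open sets $\{g\mid g(c)=f(c)\ \forall c\in F\}$, $F\subseteq\mathcal C$ finite. *)

theory Defs
  imports "HOL-Algebra.Module"
begin

text \<open>An R-bimodule: additive abelian group, left action (the field smult of the library
  module record) and right action rmult.\<close>
record ('r, 'c) bimod = "('r, 'c) module" +
  rmult :: "'c \<Rightarrow> 'r \<Rightarrow> 'c"

record ('s, 'm) rmodule = "'m ring" +
  ract :: "'m \<Rightarrow> 's \<Rightarrow> 'm"

definition lsum :: "('a, 'b) ring_scheme \<Rightarrow> 'a list \<Rightarrow> 'a" where
  "lsum M xs = foldr (\<lambda>x acc. x \<oplus>\<^bsub>M\<^esub> acc) xs \<zero>\<^bsub>M\<^esub>"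

definition bimodule :: "'r ring \<Rightarrow> ('r, 'c) bimod \<Rightarrow> bool" where
  "bimodule R C \<longleftrightarrow> ring R \<and> abelian_group C \<and>
    (\<forall>r\<in>carrier R. \<forall>c\<in>carrier C. r \<odot>\<^bsub>C\<^esub> c \<in> carrier C \<and> rmult C c r \<in> carrier C) \<and>
    (\<forall>r\<in>carrier R. \<forall>s\<in>carrier R. \<forall>c\<in>carrier C.
        (r \<otimes>\<^bsub>R\<^esub> s) \<odot>\<^bsub>C\<^esub> c = r \<odot>\<^bsub>C\<^esub> (s \<odot>\<^bsub>C\<^esub> c) \<and>
        (r \<oplus>\<^bsub>R\<^esub> s) \<odot>\<^bsub>C\<^esub> c = (r \<odot>\<^bsub>C\<^esub> c) \<oplus>\<^bsub>C\<^esub> (s \<odot>\<^bsub>C\<^esub> c) \<and>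
        rmult C c (r \<otimes>\<^bsub>R\<^esub> s) = rmult C (rmult C c r) s \<and>
        rmult C c (r \<oplus>\<^bsub>R\<^esub> s) = rmult C c r \<oplus>\<^bsub>C\<^esub> rmult C c s \<and>
        rmult C (r \<odot>\<^bsub>C\<^esub> c) s = r \<odot>\<^bsub>C\<^esub> (rmult C c s)) \<and>
    (\<forall>r\<in>carrier R. \<forall>c\<in>carrier C. \<forall>d\<in>carrier C.
        r \<odot>\<^bsub>C\<^esub> (c \<oplus>\<^bsub>C\<^esub> d) = (r \<odot>\<^bsub>C\<^esub> c) \<oplus>\<^bsub>C\<^esub> (r \<odot>\<^bsub>C\<^esub> d) \<and>
        rmult C (c \<oplus>\<^bsub>C\<^esub> d) r = rmult C c r \<oplus>\<^bsub>C\<^esub> rmult C d r) \<and>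
    (\<forall>c\<in>carrier C. \<one>\<^bsub>R\<^esub> \<odot>\<^bsub>C\<^esub> c = c \<and> rmult C c \<one>\<^bsub>R\<^esub> = c)"

definition right_module :: "('s, 'a) ring_scheme \<Rightarrow> ('s, 'm) rmodule \<Rightarrow> bool" where
  "right_module S M \<longleftrightarrow> ring S \<and> abelian_group M \<and>
    (\<forall>m\<in>carrier M. \<forall>s\<in>carrier S. ract M m s \<in> carrier M) \<and>
    (\<forall>m\<in>carrier M. \<forall>s\<in>carrier S. \<forall>t\<in>carrier S.
        ract M m (s \<otimes>\<^bsub>S\<^esub> t) = ract M (ract M m s) t \<and>
        ract M m (s \<oplus>\<^bsub>S\<^esub> t) = ract M m s \<oplus>\<^bsub>M\<^esub> ract M m t) \<and>
    (\<forall>m\<in>carrier M. \<forall>n\<in>carrier M. \<forall>s\<in>carrier S.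
        ract M (m \<oplus>\<^bsub>M\<^esub> n) s = ract M m s \<oplus>\<^bsub>M\<^esub> ract M n s) \<and>
    (\<forall>m\<in>carrier M. ract M m \<one>\<^bsub>S\<^esub> = m)"

definition rmod_hom :: "('s, 'a) ring_scheme \<Rightarrow> ('s, 'm) rmodule \<Rightarrow> ('s, 'n) rmodule
    \<Rightarrow> ('m \<Rightarrow> 'n) \<Rightarrow> bool" where
  "rmod_hom S M N h \<longleftrightarrow> h \<in> carrier M \<rightarrow> carrier N \<and>
    (\<forall>x\<in>carrier M. \<forall>y\<in>carrier M. h (x \<oplus>\<^bsub>M\<^esub> y) = h x \<oplus>\<^bsub>N\<^esub> h y) \<and>
    (\<forall>x\<in>carrier M. \<forall>s\<in>carrier S. h (ract M x s) = ract N (h x) s)"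

text \<open>Elements of a tensor product are represented by finite lists of simple tensors
  (formal sums); two lists represent the same element iff they are related by the
  congruence (w.r.t. concatenation, which is the addition) generated by the defining
  relations of the tensor product.\<close>

inductive lcong :: "'a set \<Rightarrow> ('a list \<times> 'a list) set \<Rightarrow> 'a list \<Rightarrow> 'a list \<Rightarrow> bool"
  for S G where
  lc_refl: "set xs \<subseteq> S \<Longrightarrow> lcong S G xs xs"
| lc_gen: "(xs, ys) \<in> G \<Longrightarrow> lcong S G xs ys"
| lc_sym: "lcong S G xs ys \<Longrightarrow> lcong S G ys xs"
| lc_trans: "lcong S G xs ys \<Longrightarrow> lcong S G ys zs \<Longrightarrow> lcong S G xs zs"
| lc_app: "lcong S G xs xs' \<Longrightarrow> lcong S G ys ys' \<Longrightarrow> lcong S G (xs @ ys) (xs' @ ys')"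
| lc_comm: "set xs \<subseteq> S \<Longrightarrow> set ys \<subseteq> S \<Longrightarrow> lcong S G (xs @ ys) (ys @ xs)"

definition tens2_rel :: "'r ring \<Rightarrow> ('r, 'c) bimod \<Rightarrow> (('c \<times> 'c) list \<times> ('c \<times> 'c) list) set" where
  "tens2_rel R C =
     {([(a \<oplus>\<^bsub>C\<^esub> a', b)], [(a, b), (a', b)]) | a a' b.
        a \<in> carrier C \<and> a' \<in> carrier C \<and> b \<in> carrier C}
   \<union> {([(a, b \<oplus>\<^bsub>C\<^esub> b')], [(a, b), (a, b')]) | a b b'.
        a \<in> carrier C \<and> b \<in> carrier C \<and> b' \<in> carrier C}
   \<union> {([(rmult C a r, b)], [(a, r \<odot>\<^bsub>C\<^esub> b)]) | a r b.
        a \<in> carrier C \<and> r \<in> carrier R \<and> b \<in> carrier C}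
   \<union> {([(\<zero>\<^bsub>C\<^esub>, b)], []) | b. b \<in> carrier C}
   \<union> {([(a, \<zero>\<^bsub>C\<^esub>)], []) | a. a \<in> carrier C}"

definition tens2_eq :: "'r ring \<Rightarrow> ('r, 'c) bimod \<Rightarrow> ('c \<times> 'c) list \<Rightarrow> ('c \<times> 'c) list \<Rightarrow> bool" where
  "tens2_eq R C = lcong (carrier C \<times> carrier C) (tens2_rel R C)"

definition tens3_rel :: "'r ring \<Rightarrow> ('r, 'c) bimod
    \<Rightarrow> (('c \<times> 'c \<times> 'c) list \<times> ('c \<times> 'c \<times> 'c) list) set" where
  "tens3_rel R C =
     {([(a \<oplus>\<^bsub>C\<^esub> a', b, d)], [(a, b, d), (a', b, d)]) | a a' b d.
        a \<in> carrier C \<and> a' \<in> carrier C \<and> b \<in> carrier C \<and> d \<in> carrier C}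
   \<union> {([(a, b \<oplus>\<^bsub>C\<^esub> b', d)], [(a, b, d), (a, b', d)]) | a b b' d.
        a \<in> carrier C \<and> b \<in> carrier C \<and> b' \<in> carrier C \<and> d \<in> carrier C}
   \<union> {([(a, b, d \<oplus>\<^bsub>C\<^esub> d')], [(a, b, d), (a, b, d')]) | a b d d'.
        a \<in> carrier C \<and> b \<in> carrier C \<and> d \<in> carrier C \<and> d' \<in> carrier C}
   \<union> {([(rmult C a r, b, d)], [(a, r \<odot>\<^bsub>C\<^esub> b, d)]) | a r b d.
        a \<in> carrier C \<and> r \<in> carrier R \<and> b \<in> carrier C \<and> d \<in> carrier C}
   \<union> {([(a, rmult C b r, d)], [(a, b, r \<odot>\<^bsub>C\<^esub> d)]) | a r b d.
        a \<in> carrier C \<and> r \<in> carrier R \<and> b \<in> carrier C \<and> d \<in> carrier C}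
   \<union> {([(\<zero>\<^bsub>C\<^esub>, b, d)], []) | b d. b \<in> carrier C \<and> d \<in> carrier C}
   \<union> {([(a, \<zero>\<^bsub>C\<^esub>, d)], []) | a d. a \<in> carrier C \<and> d \<in> carrier C}
   \<union> {([(a, b, \<zero>\<^bsub>C\<^esub>)], []) | a b. a \<in> carrier C \<and> b \<in> carrier C}"

definition tens3_eq :: "'r ring \<Rightarrow> ('r, 'c) bimod
    \<Rightarrow> ('c \<times> 'c \<times> 'c) list \<Rightarrow> ('c \<times> 'c \<times> 'c) list \<Rightarrow> bool" where
  "tens3_eq R C = lcong (carrier C \<times> carrier C \<times> carrier C) (tens3_rel R C)"

text \<open>\<Delta> c is a list representing \<Delta>(c) = c_(1) \<otimes> c_(2) in C \<otimes>_R C.\<close>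
definition coring :: "'r ring \<Rightarrow> ('r, 'c) bimod \<Rightarrow> ('c \<Rightarrow> ('c \<times> 'c) list) \<Rightarrow> ('c \<Rightarrow> 'r) \<Rightarrow> bool" where
  "coring R C \<Delta> \<epsilon> \<longleftrightarrow> bimodule R C \<and>
    (\<forall>c\<in>carrier C. set (\<Delta> c) \<subseteq> carrier C \<times> carrier C \<and> \<epsilon> c \<in> carrier R) \<and>
    (\<forall>c\<in>carrier C. \<forall>d\<in>carrier C.
        tens2_eq R C (\<Delta> (c \<oplus>\<^bsub>C\<^esub> d)) (\<Delta> c @ \<Delta> d) \<and>
        \<epsilon> (c \<oplus>\<^bsub>C\<^esub> d) = \<epsilon> c \<oplus>\<^bsub>R\<^esub> \<epsilon> d) \<and>
    (\<forall>r\<in>carrier R. \<forall>c\<in>carrier C.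
        tens2_eq R C (\<Delta> (r \<odot>\<^bsub>C\<^esub> c)) (map (\<lambda>(a, b). (r \<odot>\<^bsub>C\<^esub> a, b)) (\<Delta> c)) \<and>
        tens2_eq R C (\<Delta> (rmult C c r)) (map (\<lambda>(a, b). (a, rmult C b r)) (\<Delta> c)) \<and>
        \<epsilon> (r \<odot>\<^bsub>C\<^esub> c) = r \<otimes>\<^bsub>R\<^esub> \<epsilon> c \<and>
        \<epsilon> (rmult C c r) = \<epsilon> c \<otimes>\<^bsub>R\<^esub> r) \<and>
    (\<forall>c\<in>carrier C.
        tens3_eq R C (concat (map (\<lambda>(a, b). map (\<lambda>(x, y). (x, y, b)) (\<Delta> a)) (\<Delta> c)))
                     (concat (map (\<lambda>(a, b). map (\<lambda>(x, y). (a, x, y)) (\<Delta> b)) (\<Delta> c)))) \<and>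
    (\<forall>c\<in>carrier C.
        lsum C (map (\<lambda>(a, b). \<epsilon> a \<odot>\<^bsub>C\<^esub> b) (\<Delta> c)) = c \<and>
        lsum C (map (\<lambda>(a, b). rmult C a (\<epsilon> b)) (\<Delta> c)) = c)"

text \<open>The left dual *C = _R Hom(C, R) (functions taken extensional on carrier C).\<close>
definition ldual :: "'r ring \<Rightarrow> ('r, 'c) bimod \<Rightarrow> ('c \<Rightarrow> 'r) set" where
  "ldual R C = {f. f \<in> extensional (carrier C) \<and> (\<forall>c\<in>carrier C. f c \<in> carrier R) \<and>
     (\<forall>c\<in>carrier C. \<forall>d\<in>carrier C. f (c \<oplus>\<^bsub>C\<^esub> d) = f c \<oplus>\<^bsub>R\<^esub> f d) \<and>
     (\<forall>r\<in>carrier R. \<forall>c\<in>carrier C. f (r \<odot>\<^bsub>C\<^esub> c) = r \<otimes>\<^bsub>R\<^esub> f c)}"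

text \<open>(f # g)(c) = g(c_(1) f(c_(2))).\<close>
definition dual_mult :: "'r ring \<Rightarrow> ('r, 'c) bimod \<Rightarrow> ('c \<Rightarrow> ('c \<times> 'c) list)
    \<Rightarrow> ('c \<Rightarrow> 'r) \<Rightarrow> ('c \<Rightarrow> 'r) \<Rightarrow> ('c \<Rightarrow> 'r)" where
  "dual_mult R C \<Delta> f g = (\<lambda>c\<in>carrier C. g (lsum C (map (\<lambda>(a, b). rmult C a (f b)) (\<Delta> c))))"

definition dual_ring :: "'r ring \<Rightarrow> ('r, 'c) bimod \<Rightarrow> ('c \<Rightarrow> ('c \<times> 'c) list) \<Rightarrow> ('c \<Rightarrow> 'r)
    \<Rightarrow> ('c \<Rightarrow> 'r) ring" where
  "dual_ring R C \<Delta> \<epsilon> = \<lparr>carrier = ldual R C,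
     mult = dual_mult R C \<Delta>,
     one = (\<lambda>c\<in>carrier C. \<epsilon> c),
     zero = (\<lambda>c\<in>carrier C. \<zero>\<^bsub>R\<^esub>),
     add = (\<lambda>f g. \<lambda>c\<in>carrier C. f c \<oplus>\<^bsub>R\<^esub> g c)\<rparr>"

definition dual_rmod :: "'r ring \<Rightarrow> ('r, 'c) bimod \<Rightarrow> ('c \<Rightarrow> ('c \<times> 'c) list) \<Rightarrow> ('c \<Rightarrow> 'r)
    \<Rightarrow> ('c \<Rightarrow> 'r, 'c \<Rightarrow> 'r) rmodule" where
  "dual_rmod R C \<Delta> \<epsilon> = \<lparr>carrier = ldual R C,
     mult = dual_mult R C \<Delta>,
     one = (\<lambda>c\<in>carrier C. \<epsilon> c),
     zero = (\<lambda>c\<in>carrier C. \<zero>\<^bsub>R\<^esub>),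
     add = (\<lambda>f g. \<lambda>c\<in>carrier C. f c \<oplus>\<^bsub>R\<^esub> g c),
     ract = dual_mult R C \<Delta>\<rparr>"

text \<open>The ring map R \<rightarrow> *C, r \<mapsto> \<epsilon>(-) r, through which right *C-modules are right R-modules.\<close>
definition dual_unit :: "'r ring \<Rightarrow> ('r, 'c) bimod \<Rightarrow> ('c \<Rightarrow> 'r) \<Rightarrow> 'r \<Rightarrow> ('c \<Rightarrow> 'r)" where
  "dual_unit R C \<epsilon> r = (\<lambda>c\<in>carrier C. \<epsilon> c \<otimes>\<^bsub>R\<^esub> r)"

text \<open>Rat^C(M): elements m with some \<Sum> m_i \<otimes> c_i such that m\<cdot>f = \<Sum> m_i f(c_i) for all f.\<close>
definition Rat :: "'r ring \<Rightarrow> ('r, 'c) bimod \<Rightarrow> ('c \<Rightarrow> ('c \<times> 'c) list) \<Rightarrow> ('c \<Rightarrow> 'r)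
    \<Rightarrow> ('c \<Rightarrow> 'r, 'm) rmodule \<Rightarrow> 'm set" where
  "Rat R C \<Delta> \<epsilon> M = {m \<in> carrier M. \<exists>xs. set xs \<subseteq> carrier M \<times> carrier C \<and>
     (\<forall>f\<in>ldual R C. ract M m f =
        lsum M (map (\<lambda>(n, c). ract M n (dual_unit R C \<epsilon> (f c))) xs))}"

text \<open>Locally projective left R-module (left \<alpha>-condition), via the finite dual basis
  characterisation: every finite subset F admits f_j \<in> *C, x_j \<in> C with
  c = \<Sum> f_j(c) x_j for all c \<in> F.\<close>
definition left_alpha :: "'r ring \<Rightarrow> ('r, 'c) bimod \<Rightarrow> bool" where
  "left_alpha R C \<longleftrightarrow> (\<forall>F. finite F \<and> F \<subseteq> carrier C \<longrightarrow>
     (\<exists>ps. set ps \<subseteq> ldual R C \<times> carrier C \<and>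
        (\<forall>c\<in>F. c = lsum C (map (\<lambda>(f, x). f c \<odot>\<^bsub>C\<^esub> x) ps))))"

definition left_submodule :: "'r ring \<Rightarrow> ('r, 'c) bimod \<Rightarrow> 'c set \<Rightarrow> bool" where
  "left_submodule R C D \<longleftrightarrow> D \<subseteq> carrier C \<and> \<zero>\<^bsub>C\<^esub> \<in> D \<and>
     (\<forall>c\<in>D. \<forall>d\<in>D. c \<oplus>\<^bsub>C\<^esub> d \<in> D) \<and> (\<forall>r\<in>carrier R. \<forall>c\<in>D. r \<odot>\<^bsub>C\<^esub> c \<in> D)"

text \<open>D is a left C-subcomodule of C (with coaction \<Delta>): \<Delta>(D) \<subseteq> C \<otimes>_R D.\<close>
definition left_subcomodule :: "'r ring \<Rightarrow> ('r, 'c) bimod \<Rightarrow> ('c \<Rightarrow> ('c \<times> 'c) list) \<Rightarrow> 'c set \<Rightarrow> bool" where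
  "left_subcomodule R C \<Delta> D \<longleftrightarrow> left_submodule R C D \<and>
     (\<forall>c\<in>D. \<exists>xs. set xs \<subseteq> carrier C \<times> D \<and> tens2_eq R C (\<Delta> c) xs)"

definition fin_gen_left :: "'r ring \<Rightarrow> ('r, 'c) bimod \<Rightarrow> 'c set \<Rightarrow> bool" where
  "fin_gen_left R C D \<longleftrightarrow> (\<exists>gs. set gs \<subseteq> D \<and>
     (\<forall>c\<in>D. \<exists>rs. length rs = length gs \<and> set rs \<subseteq> carrier R \<and>
        c = lsum C (map2 (\<lambda>r g. r \<odot>\<^bsub>C\<^esub> g) rs gs)))"

definition internal_direct_sum :: "('r, 'c) bimod \<Rightarrow> 'i set \<Rightarrow> ('i \<Rightarrow> 'c set) \<Rightarrow> bool" where
  "internal_direct_sum C I D \<longleftrightarrow>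
     (\<forall>c\<in>carrier C. \<exists>J x. finite J \<and> J \<subseteq> I \<and> (\<forall>i\<in>J. x i \<in> D i) \<and> c = finsum C x J) \<and>
     (\<forall>J x. finite J \<and> J \<subseteq> I \<and> (\<forall>i\<in>J. x i \<in> D i) \<and> finsum C x J = \<zero>\<^bsub>C\<^esub>
        \<longrightarrow> (\<forall>i\<in>J. x i = \<zero>\<^bsub>C\<^esub>))"

definition fin_nbhd :: "'r ring \<Rightarrow> ('r, 'c) bimod \<Rightarrow> ('c \<Rightarrow> 'r) \<Rightarrow> 'c set \<Rightarrow> ('c \<Rightarrow> 'r) set" where
  "fin_nbhd R C f F = {g \<in> ldual R C. \<forall>c\<in>F. g c = f c}"

definition dense_finite_top :: "'r ring \<Rightarrow> ('r, 'c) bimod \<Rightarrow> ('c \<Rightarrow> 'r) set \<Rightarrow> bool" where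
  "dense_finite_top R C X \<longleftrightarrow> (\<forall>f\<in>ldual R C. \<forall>F. finite F \<and> F \<subseteq> carrier C \<longrightarrow>
     fin_nbhd R C f F \<inter> X \<noteq> {})"

end

theory Submission
  imports Defs
begin

text \<open>
  Proof plan.  For f \<in> *C write f \<rightharpoonup> c = c_(1) f(c_(2)) (the map hit f below), so
  that (f # g)(c) = g(f \<rightharpoonup> c).

  Rat is always left exact; the only issue is lifting a rational x \<in> M with
  g x = 0 to a rational preimage.  If Rat(*C) is dense, pick a rational g0 \<in> *C that
  agrees with \<epsilon> on the finitely many c_i occurring in the rational expansion of x; then
  x \<cdot> g0 = x, and for any preimage l of x the element l \<cdot> g0 is a rational preimage.

  Given f \<in> *C and a finite F \<subseteq> C, choose a finite J \<subseteq> I with F inside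
  C_J = \<Oplus>_{j\<in>J} C_j, and let P_J be the projection of C onto C_J.  Since each C_j is a
  left subcomodule, (f \<circ> P_J) \<rightharpoonup> c = f \<rightharpoonup> P_J c.  Since C_J is finitely generated and C
  is locally projective, there is a finite dual basis (\<phi>_k, y_k) with
  P_J c = \<Sum> \<phi>_k(P_J c) y_k.  Together these show that f \<circ> P_J is rational, and it agrees
  with f on F.
\<close>

lemma lsum_Nil[simp]: "lsum M [] = \<zero>\<^bsub>M\<^esub>" by (simp add: lsum_def)
lemma lsum_Cons[simp]: "lsum M (x # xs) = x \<oplus>\<^bsub>M\<^esub> lsum M xs" by (simp add: lsum_def)

lemma (in abelian_monoid) lsum_closed[simp]: "set xs \<subseteq> carrier G \<Longrightarrow> lsum G xs \<in> carrier G"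
  by (induct xs) auto

lemma (in abelian_monoid) lsum_append:
  "set xs \<subseteq> carrier G \<Longrightarrow> set ys \<subseteq> carrier G \<Longrightarrow> lsum G (xs @ ys) = lsum G xs \<oplus> lsum G ys"
  by (induct xs) (auto simp: a_assoc)

lemma (in abelian_monoid) lsum_map_append:
  "(\<And>x. x \<in> S \<Longrightarrow> t x \<in> carrier G) \<Longrightarrow> set xs \<subseteq> S \<Longrightarrow> set ys \<subseteq> S \<Longrightarrow>
   lsum G (map t xs @ map t ys) = lsum G (map t xs) \<oplus> lsum G (map t ys)"
  by (rule lsum_append) auto

lemma (in abelian_monoid) lsum_map_add:
  "(\<And>p. p \<in> set ps \<Longrightarrow> u p \<in> carrier G \<and> v p \<in> carrier G) \<Longrightarrow>
   lsum G (map (\<lambda>p. u p \<oplus> v p) ps) = lsum G (map u ps) \<oplus> lsum G (map v ps)"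
proof (induct ps)
  case (Cons p ps)
  have "lsum G (map u ps) \<in> carrier G" "lsum G (map v ps) \<in> carrier G"
    using Cons(2) by (auto intro!: lsum_closed)
  then show ?case using Cons by (simp add: a_ac)
qed simp

lemma (in abelian_monoid) lsum_zeros: "lsum G (map (\<lambda>_. \<zero>) xs) = \<zero>"
  by (induct xs) auto

lemma lsum_cong_map:
  "(\<And>x. x \<in> set xs \<Longrightarrow> f x = g x) \<Longrightarrow> lsum M (map f xs) = lsum M (map g xs)"
  by (metis map_eq_conv)

lemma lsum_hom:
  assumes G: "abelian_monoid G" and H: "abelian_monoid H"
    and h0: "h \<zero>\<^bsub>G\<^esub> = \<zero>\<^bsub>H\<^esub>"
    and ha: "\<And>x y. x \<in> carrier G \<Longrightarrow> y \<in> carrier G \<Longrightarrow> h (x \<oplus>\<^bsub>G\<^esub> y) = h x \<oplus>\<^bsub>H\<^esub> h y"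
    and xs: "set xs \<subseteq> carrier G"
  shows "h (lsum G xs) = lsum H (map h xs)"
  using xs by (induct xs) (auto simp: h0 ha abelian_monoid.lsum_closed[OF G])

text \<open>A term assignment t whose sum respects the generating relations is well defined on
  the congruence classes lcong: this is how maps out of C \<otimes>_R C are constructed.\<close>
lemma (in abelian_monoid) lcong_lsum:
  assumes "lcong S Rel xs ys"
    and gen: "\<And>a b. (a, b) \<in> Rel \<Longrightarrow> set a \<subseteq> S \<and> set b \<subseteq> S \<and> lsum G (map t a) = lsum G (map t b)"
    and t: "\<And>x. x \<in> S \<Longrightarrow> t x \<in> carrier G"
  shows "set xs \<subseteq> S \<and> set ys \<subseteq> S \<and> lsum G (map t xs) = lsum G (map t ys)"
  using assms(1)
proof (induct rule: lcong.induct)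
  case (lc_app xs xs' ys ys')
  then show ?case
    using t by (simp add: lsum_map_append[of S])
next
  case (lc_comm xs ys)
  then show ?case using t
    by (simp add: lsum_map_append[of S]) (rule a_comm; rule lsum_closed; auto)
qed (use gen in auto)

lemma (in abelian_group) idem_zero: "x \<in> carrier G \<Longrightarrow> x \<oplus> x = x \<Longrightarrow> x = \<zero>"
  by (metis add.l_cancel_one' zero_closed)

lemma (in abelian_group) finsum_neg:
  "x \<in> J \<rightarrow> carrier G \<Longrightarrow> finsum G (\<lambda>i. \<ominus> x i) J = \<ominus> finsum G x J"
proof (induct J rule: infinite_finite_induct)
  case (insert j J)
  then have "x \<in> J \<rightarrow> carrier G" "x j \<in> carrier G" "(\<lambda>i. \<ominus> x i) \<in> J \<rightarrow> carrier G" by auto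
  then show ?case using insert by (simp add: minus_add)
qed (rule sym, rule minus_equality; simp)+

lemma (in abelian_group) eq_if_diff_zero: "a \<in> carrier G \<Longrightarrow> b \<in> carrier G \<Longrightarrow> a \<oplus> \<ominus> b = \<zero> \<Longrightarrow> a = b"
  by (metis add.inv_closed minus_equality minus_minus a_comm)

lemma rm_parts:
  assumes "right_module S M"
  shows "ring S" "abelian_group M"
    "\<And>m s. m \<in> carrier M \<Longrightarrow> s \<in> carrier S \<Longrightarrow> ract M m s \<in> carrier M"
    "\<And>m s t. m \<in> carrier M \<Longrightarrow> s \<in> carrier S \<Longrightarrow> t \<in> carrier S \<Longrightarrow>
        ract M m (s \<otimes>\<^bsub>S\<^esub> t) = ract M (ract M m s) t"
    "\<And>m s t. m \<in> carrier M \<Longrightarrow> s \<in> carrier S \<Longrightarrow> t \<in> carrier S \<Longrightarrow>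
        ract M m (s \<oplus>\<^bsub>S\<^esub> t) = ract M m s \<oplus>\<^bsub>M\<^esub> ract M m t"
    "\<And>m. m \<in> carrier M \<Longrightarrow> ract M m \<one>\<^bsub>S\<^esub> = m"
  using assms unfolding right_module_def by blast+

lemma rm_zero:
  assumes M: "right_module S M" and m: "m \<in> carrier M"
  shows "ract M m \<zero>\<^bsub>S\<^esub> = \<zero>\<^bsub>M\<^esub>"
proof -
  interpret S: ring S by (rule rm_parts(1)[OF M])
  interpret M: abelian_group M by (rule rm_parts(2)[OF M])
  show ?thesis
    by (rule M.idem_zero) (use rm_parts(3,5)[OF M] m in \<open>auto simp flip: rm_parts(5)[OF M]\<close>)
qed

lemma rm_lsum:
  assumes M: "right_module S M" and m: "m \<in> carrier M" and ss: "set ss \<subseteq> carrier S"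
  shows "ract M m (lsum S ss) = lsum M (map (ract M m) ss)"
proof -
  interpret S: ring S by (rule rm_parts(1)[OF M])
  interpret M: abelian_group M by (rule rm_parts(2)[OF M])
  show ?thesis
    by (rule lsum_hom)
      (use ss rm_parts(5)[OF M] rm_zero[OF M m] m in \<open>auto simp: S.abelian_monoid_axioms M.abelian_monoid_axioms\<close>)
qed

lemma hom_ract: "rmod_hom S M N f \<Longrightarrow> x \<in> carrier M \<Longrightarrow> s \<in> carrier S \<Longrightarrow> f (ract M x s) = ract N (f x) s"
  unfolding rmod_hom_def by blast

lemma hom_closed: "rmod_hom S M N f \<Longrightarrow> x \<in> carrier M \<Longrightarrow> f x \<in> carrier N"
  unfolding rmod_hom_def by blast

lemma hom_lsum:
  assumes M: "right_module S M" and N: "right_module S N" and h: "rmod_hom S M N f"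
    and xs: "set xs \<subseteq> carrier M"
  shows "f (lsum M xs) = lsum N (map f xs)"
proof -
  interpret M: abelian_group M by (rule rm_parts(2)[OF M])
  interpret N: abelian_group N by (rule rm_parts(2)[OF N])
  have f: "f \<in> carrier M \<rightarrow> carrier N"
    "\<And>x y. x \<in> carrier M \<Longrightarrow> y \<in> carrier M \<Longrightarrow> f (x \<oplus>\<^bsub>M\<^esub> y) = f x \<oplus>\<^bsub>N\<^esub> f y"
    using h unfolding rmod_hom_def by blast+
  have "f \<zero>\<^bsub>M\<^esub> = \<zero>\<^bsub>N\<^esub>"
    by (rule N.idem_zero) (use f in \<open>auto simp flip: f(2)\<close>)
  then show ?thesis
    by (rule lsum_hom[OF M.abelian_monoid_axioms N.abelian_monoid_axioms]) (use f xs in auto)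
qed

section \<open>Corings and their left dual ring\<close>

locale coring_struct =
  fixes R :: "'r ring" and C :: "('r, 'c) bimod"
    and \<Delta> :: "'c \<Rightarrow> ('c \<times> 'c) list" and \<epsilon> :: "'c \<Rightarrow> 'r"
  assumes coring: "coring R C \<Delta> \<epsilon>"
begin

lemma bimod: "bimodule R C" using coring unfolding coring_def by blast

sublocale R: ring R using bimod by (simp add: bimodule_def)
sublocale C: abelian_group C using bimod by (simp add: bimodule_def)

lemma sm_closed[simp]: "r \<in> carrier R \<Longrightarrow> c \<in> carrier C \<Longrightarrow> r \<odot>\<^bsub>C\<^esub> c \<in> carrier C"
  using bimod by (simp add: bimodule_def)
lemma rm_closed[simp]: "r \<in> carrier R \<Longrightarrow> c \<in> carrier C \<Longrightarrow> rmult C c r \<in> carrier C"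
  using bimod by (simp add: bimodule_def)
lemma sm_assoc: "r \<in> carrier R \<Longrightarrow> s \<in> carrier R \<Longrightarrow> c \<in> carrier C \<Longrightarrow>
   (r \<otimes>\<^bsub>R\<^esub> s) \<odot>\<^bsub>C\<^esub> c = r \<odot>\<^bsub>C\<^esub> (s \<odot>\<^bsub>C\<^esub> c)"
  using bimod by (simp add: bimodule_def)
lemma sm_ldistr: "r \<in> carrier R \<Longrightarrow> s \<in> carrier R \<Longrightarrow> c \<in> carrier C \<Longrightarrow>
   (r \<oplus>\<^bsub>R\<^esub> s) \<odot>\<^bsub>C\<^esub> c = (r \<odot>\<^bsub>C\<^esub> c) \<oplus>\<^bsub>C\<^esub> (s \<odot>\<^bsub>C\<^esub> c)"
  using bimod by (simp add: bimodule_def)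
lemma rm_assoc: "r \<in> carrier R \<Longrightarrow> s \<in> carrier R \<Longrightarrow> c \<in> carrier C \<Longrightarrow>
   rmult C c (r \<otimes>\<^bsub>R\<^esub> s) = rmult C (rmult C c r) s"
  using bimod by (simp add: bimodule_def)
lemma rm_ldistr: "r \<in> carrier R \<Longrightarrow> s \<in> carrier R \<Longrightarrow> c \<in> carrier C \<Longrightarrow>
   rmult C c (r \<oplus>\<^bsub>R\<^esub> s) = rmult C c r \<oplus>\<^bsub>C\<^esub> rmult C c s"
  using bimod by (simp add: bimodule_def)
lemma sm_rm: "r \<in> carrier R \<Longrightarrow> s \<in> carrier R \<Longrightarrow> c \<in> carrier C \<Longrightarrow>
   rmult C (r \<odot>\<^bsub>C\<^esub> c) s = r \<odot>\<^bsub>C\<^esub> (rmult C c s)"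
  using bimod by (simp add: bimodule_def)
lemma sm_rdistr: "r \<in> carrier R \<Longrightarrow> c \<in> carrier C \<Longrightarrow> d \<in> carrier C \<Longrightarrow>
   r \<odot>\<^bsub>C\<^esub> (c \<oplus>\<^bsub>C\<^esub> d) = (r \<odot>\<^bsub>C\<^esub> c) \<oplus>\<^bsub>C\<^esub> (r \<odot>\<^bsub>C\<^esub> d)"
  using bimod by (simp add: bimodule_def)
lemma rm_rdistr: "r \<in> carrier R \<Longrightarrow> c \<in> carrier C \<Longrightarrow> d \<in> carrier C \<Longrightarrow>
   rmult C (c \<oplus>\<^bsub>C\<^esub> d) r = rmult C c r \<oplus>\<^bsub>C\<^esub> rmult C d r"
  using bimod by (simp add: bimodule_def)
lemma sm_one[simp]: "c \<in> carrier C \<Longrightarrow> \<one>\<^bsub>R\<^esub> \<odot>\<^bsub>C\<^esub> c = c"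
  using bimod by (simp add: bimodule_def)

lemma sm_zero_r[simp]: "c \<in> carrier C \<Longrightarrow> \<zero>\<^bsub>R\<^esub> \<odot>\<^bsub>C\<^esub> c = \<zero>\<^bsub>C\<^esub>"
  by (rule C.idem_zero) (auto simp: sm_ldistr[symmetric])
lemma sm_zero_c[simp]: "r \<in> carrier R \<Longrightarrow> r \<odot>\<^bsub>C\<^esub> \<zero>\<^bsub>C\<^esub> = \<zero>\<^bsub>C\<^esub>"
  by (rule C.idem_zero) (auto simp: sm_rdistr[symmetric])
lemma rm_zero_r[simp]: "c \<in> carrier C \<Longrightarrow> rmult C c \<zero>\<^bsub>R\<^esub> = \<zero>\<^bsub>C\<^esub>"
  by (rule C.idem_zero) (auto simp: rm_ldistr[symmetric])
lemma rm_zero_c[simp]: "r \<in> carrier R \<Longrightarrow> rmult C \<zero>\<^bsub>C\<^esub> r = \<zero>\<^bsub>C\<^esub>"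
  by (rule C.idem_zero) (auto simp: rm_rdistr[symmetric])

lemma sm_neg: "c \<in> carrier C \<Longrightarrow> \<ominus>\<^bsub>C\<^esub> c = (\<ominus>\<^bsub>R\<^esub> \<one>\<^bsub>R\<^esub>) \<odot>\<^bsub>C\<^esub> c"
proof -
  assume c: "c \<in> carrier C"
  have "(\<ominus>\<^bsub>R\<^esub> \<one>\<^bsub>R\<^esub>) \<odot>\<^bsub>C\<^esub> c \<oplus>\<^bsub>C\<^esub> c = \<zero>\<^bsub>C\<^esub>"
    using c by (metis R.l_neg R.one_closed R.a_inv_closed sm_ldistr sm_one sm_zero_r)
  then show ?thesis using c by (metis C.add.inv_equality sm_closed R.one_closed R.a_inv_closed)
qed

lemma Delta_set: "c \<in> carrier C \<Longrightarrow> set (\<Delta> c) \<subseteq> carrier C \<times> carrier C"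
  using coring unfolding coring_def by blast
lemma eps_closed[simp]: "c \<in> carrier C \<Longrightarrow> \<epsilon> c \<in> carrier R"
  using coring unfolding coring_def by blast
lemma Delta_add: "c \<in> carrier C \<Longrightarrow> d \<in> carrier C \<Longrightarrow> tens2_eq R C (\<Delta> (c \<oplus>\<^bsub>C\<^esub> d)) (\<Delta> c @ \<Delta> d)"
  using coring unfolding coring_def by blast
lemma eps_add: "c \<in> carrier C \<Longrightarrow> d \<in> carrier C \<Longrightarrow> \<epsilon> (c \<oplus>\<^bsub>C\<^esub> d) = \<epsilon> c \<oplus>\<^bsub>R\<^esub> \<epsilon> d"
  using coring unfolding coring_def by blast
lemma Delta_sm: "r \<in> carrier R \<Longrightarrow> c \<in> carrier C \<Longrightarrow>
   tens2_eq R C (\<Delta> (r \<odot>\<^bsub>C\<^esub> c)) (map (\<lambda>(a, b). (r \<odot>\<^bsub>C\<^esub> a, b)) (\<Delta> c))"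
  using coring unfolding coring_def by blast
lemma eps_sm: "r \<in> carrier R \<Longrightarrow> c \<in> carrier C \<Longrightarrow> \<epsilon> (r \<odot>\<^bsub>C\<^esub> c) = r \<otimes>\<^bsub>R\<^esub> \<epsilon> c"
  using coring unfolding coring_def by blast
lemma eps_rm: "r \<in> carrier R \<Longrightarrow> c \<in> carrier C \<Longrightarrow> \<epsilon> (rmult C c r) = \<epsilon> c \<otimes>\<^bsub>R\<^esub> r"
  using coring unfolding coring_def by blast
lemma counit: "c \<in> carrier C \<Longrightarrow> lsum C (map (\<lambda>(a, b). \<epsilon> a \<odot>\<^bsub>C\<^esub> b) (\<Delta> c)) = c"
  using coring unfolding coring_def by blast

lemma eps_zero[simp]: "\<epsilon> \<zero>\<^bsub>C\<^esub> = \<zero>\<^bsub>R\<^esub>"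
  by (rule R.idem_zero) (simp, metis eps_add C.zero_closed C.l_zero)

lemma eps_lsum: "set xs \<subseteq> carrier C \<Longrightarrow> \<epsilon> (lsum C xs) = lsum R (map \<epsilon> xs)"
  by (rule lsum_hom) (auto simp: eps_add C.abelian_monoid_axioms R.abelian_monoid_axioms)

lemma ldual_closed[simp]: "f \<in> ldual R C \<Longrightarrow> c \<in> carrier C \<Longrightarrow> f c \<in> carrier R"
  unfolding ldual_def by blast
lemma ldual_add: "f \<in> ldual R C \<Longrightarrow> c \<in> carrier C \<Longrightarrow> d \<in> carrier C \<Longrightarrow> f (c \<oplus>\<^bsub>C\<^esub> d) = f c \<oplus>\<^bsub>R\<^esub> f d"
  unfolding ldual_def by blast
lemma ldual_sm: "f \<in> ldual R C \<Longrightarrow> r \<in> carrier R \<Longrightarrow> c \<in> carrier C \<Longrightarrow> f (r \<odot>\<^bsub>C\<^esub> c) = r \<otimes>\<^bsub>R\<^esub> f c"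
  unfolding ldual_def by blast
lemma ldual_zero[simp]: "f \<in> ldual R C \<Longrightarrow> f \<zero>\<^bsub>C\<^esub> = \<zero>\<^bsub>R\<^esub>"
  by (rule R.idem_zero) (simp, metis ldual_add C.zero_closed C.l_zero)
lemma ldualI:
  assumes "f \<in> extensional (carrier C)" "\<And>c. c \<in> carrier C \<Longrightarrow> f c \<in> carrier R"
    "\<And>c d. c \<in> carrier C \<Longrightarrow> d \<in> carrier C \<Longrightarrow> f (c \<oplus>\<^bsub>C\<^esub> d) = f c \<oplus>\<^bsub>R\<^esub> f d"
    "\<And>r c. r \<in> carrier R \<Longrightarrow> c \<in> carrier C \<Longrightarrow> f (r \<odot>\<^bsub>C\<^esub> c) = r \<otimes>\<^bsub>R\<^esub> f c"
  shows "f \<in> ldual R C"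
  using assms unfolding ldual_def by blast

lemma ldual_lsum: "f \<in> ldual R C \<Longrightarrow> set xs \<subseteq> carrier C \<Longrightarrow> f (lsum C xs) = lsum R (map f xs)"
  by (rule lsum_hom) (auto simp: ldual_add C.abelian_monoid_axioms R.abelian_monoid_axioms)

lemma one_ldual: "(\<lambda>c\<in>carrier C. \<epsilon> c) \<in> ldual R C"
  by (rule ldualI) (auto simp: eps_add eps_sm)

lemma dual_unit_ldual: "r \<in> carrier R \<Longrightarrow> dual_unit R C \<epsilon> r \<in> ldual R C"
  by (rule ldualI) (auto simp: dual_unit_def eps_add eps_sm R.l_distr R.m_assoc)

definition additive :: "('c \<Rightarrow> 'c) \<Rightarrow> bool" where
  "additive A \<longleftrightarrow> (\<forall>c\<in>carrier C. A c \<in> carrier C) \<and>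
     (\<forall>c\<in>carrier C. \<forall>d\<in>carrier C. A (c \<oplus>\<^bsub>C\<^esub> d) = A c \<oplus>\<^bsub>C\<^esub> A d)"

definition left_linear :: "('c \<Rightarrow> 'c) \<Rightarrow> bool" where
  "left_linear A \<longleftrightarrow> additive A \<and> (\<forall>r\<in>carrier R. \<forall>c\<in>carrier C. A (r \<odot>\<^bsub>C\<^esub> c) = r \<odot>\<^bsub>C\<^esub> A c)"

lemma left_linearI:
  "(\<And>c. c \<in> carrier C \<Longrightarrow> A c \<in> carrier C) \<Longrightarrow>
   (\<And>c d. c \<in> carrier C \<Longrightarrow> d \<in> carrier C \<Longrightarrow> A (c \<oplus>\<^bsub>C\<^esub> d) = A c \<oplus>\<^bsub>C\<^esub> A d) \<Longrightarrow>
   (\<And>r c. r \<in> carrier R \<Longrightarrow> c \<in> carrier C \<Longrightarrow> A (r \<odot>\<^bsub>C\<^esub> c) = r \<odot>\<^bsub>C\<^esub> A c) \<Longrightarrow> left_linear A"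
  unfolding left_linear_def additive_def by blast

lemma additive_closed: "additive A \<Longrightarrow> c \<in> carrier C \<Longrightarrow> A c \<in> carrier C"
  unfolding additive_def by blast
lemma additive_add: "additive A \<Longrightarrow> c \<in> carrier C \<Longrightarrow> d \<in> carrier C \<Longrightarrow> A (c \<oplus>\<^bsub>C\<^esub> d) = A c \<oplus>\<^bsub>C\<^esub> A d"
  unfolding additive_def by blast
lemma linear_additive: "left_linear A \<Longrightarrow> additive A"
  unfolding left_linear_def by blast
lemma linear_closed: "left_linear A \<Longrightarrow> c \<in> carrier C \<Longrightarrow> A c \<in> carrier C"
  unfolding left_linear_def additive_def by blast
lemma linear_sm: "left_linear A \<Longrightarrow> r \<in> carrier R \<Longrightarrow> c \<in> carrier C \<Longrightarrow> A (r \<odot>\<^bsub>C\<^esub> c) = r \<odot>\<^bsub>C\<^esub> A c"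
  unfolding left_linear_def by blast

lemma additive_zero: "additive A \<Longrightarrow> A \<zero>\<^bsub>C\<^esub> = \<zero>\<^bsub>C\<^esub>"
  by (rule C.idem_zero) (auto simp: additive_closed additive_add[symmetric])

lemma additive_finsum: "additive A \<Longrightarrow> x \<in> J \<rightarrow> carrier C \<Longrightarrow> A (finsum C x J) = finsum C (\<lambda>i. A (x i)) J"
proof (induct J rule: infinite_finite_induct)
  case (insert j J)
  then have x: "x \<in> J \<rightarrow> carrier C" "x j \<in> carrier C" by auto
  then have "(\<lambda>i. A (x i)) \<in> J \<rightarrow> carrier C" "A (x j) \<in> carrier C"
    using additive_closed[OF insert(4)] by auto
  then show ?case using insert x additive_add[OF insert(4)] by simp
qed (simp_all add: additive_zero)

lemma additive_lsum: "additive A \<Longrightarrow> set xs \<subseteq> carrier C \<Longrightarrow> A (lsum C xs) = lsum C (map A xs)"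
  by (rule lsum_hom) (auto simp: additive_zero additive_add C.abelian_monoid_axioms)

lemma additive_smult: "r \<in> carrier R \<Longrightarrow> additive (\<lambda>c. r \<odot>\<^bsub>C\<^esub> c)"
  unfolding additive_def by (auto simp: sm_rdistr)

lemma finsum_sm: "r \<in> carrier R \<Longrightarrow> x \<in> J \<rightarrow> carrier C \<Longrightarrow> finsum C (\<lambda>i. r \<odot>\<^bsub>C\<^esub> x i) J = r \<odot>\<^bsub>C\<^esub> finsum C x J"
  using additive_finsum[OF additive_smult] by metis

lemma linear_ldual: "left_linear A \<Longrightarrow> f \<in> ldual R C \<Longrightarrow> (\<lambda>c\<in>carrier C. f (A c)) \<in> ldual R C"
  by (rule ldualI) (auto simp: linear_closed ldual_add additive_add[OF linear_additive] ldual_sm linear_sm)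

definition hit_tens :: "('c \<Rightarrow> 'r) \<Rightarrow> ('c \<times> 'c) list \<Rightarrow> 'c" where
  "hit_tens g xs = lsum C (map (\<lambda>(a, b). rmult C a (g b)) xs)"

lemma hit_tens_resp:
  assumes g: "g \<in> ldual R C" and eq: "tens2_eq R C xs ys"
  shows "hit_tens g xs = hit_tens g ys"
proof -
  have "set xs \<subseteq> carrier C \<times> carrier C \<and> set ys \<subseteq> carrier C \<times> carrier C \<and>
     lsum C (map (\<lambda>(a, b). rmult C a (g b)) xs) = lsum C (map (\<lambda>(a, b). rmult C a (g b)) ys)"
  proof (rule C.lcong_lsum)
    show "lcong (carrier C \<times> carrier C) (tens2_rel R C) xs ys" using eq by (simp add: tens2_eq_def)
  next
    fix a b assume "(a, b) \<in> tens2_rel R C"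
    then show "set a \<subseteq> carrier C \<times> carrier C \<and> set b \<subseteq> carrier C \<times> carrier C \<and>
      lsum C (map (\<lambda>(a, b). rmult C a (g b)) a) = lsum C (map (\<lambda>(a, b). rmult C a (g b)) b)"
      unfolding tens2_rel_def using g
      by (elim UnE CollectE exE conjE) (simp_all add: rm_rdistr ldual_add ldual_sm rm_ldistr rm_assoc)
  qed (use g in auto)
  then show ?thesis by (simp add: hit_tens_def)
qed

lemma hit_tens_append:
  "g \<in> ldual R C \<Longrightarrow> set xs \<subseteq> carrier C \<times> carrier C \<Longrightarrow> set ys \<subseteq> carrier C \<times> carrier C \<Longrightarrow>
   hit_tens g (xs @ ys) = hit_tens g xs \<oplus>\<^bsub>C\<^esub> hit_tens g ys"
  unfolding hit_tens_def map_append by (rule C.lsum_map_append[where S="carrier C \<times> carrier C"]) auto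

definition hit :: "('c \<Rightarrow> 'r) \<Rightarrow> 'c \<Rightarrow> 'c" where "hit g c = hit_tens g (\<Delta> c)"

lemma dual_mult_eval: "c \<in> carrier C \<Longrightarrow> dual_mult R C \<Delta> f g c = g (hit f c)"
  by (simp add: dual_mult_def hit_def hit_tens_def)

lemma hit_linear: "g \<in> ldual R C \<Longrightarrow> left_linear (hit g)"
proof (rule left_linearI)
  assume g: "g \<in> ldual R C"
  show "hit g c \<in> carrier C" if "c \<in> carrier C" for c
    unfolding hit_def hit_tens_def by (rule C.lsum_closed) (use Delta_set[OF that] g in auto)
  show "hit g (c \<oplus>\<^bsub>C\<^esub> d) = hit g c \<oplus>\<^bsub>C\<^esub> hit g d" if "c \<in> carrier C" "d \<in> carrier C" for c d
    unfolding hit_def using that g by (simp add: hit_tens_resp[OF _ Delta_add] hit_tens_append Delta_set)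
  show "hit g (r \<odot>\<^bsub>C\<^esub> c) = r \<odot>\<^bsub>C\<^esub> hit g c" if r: "r \<in> carrier R" and c: "c \<in> carrier C" for r c
  proof -
    have "hit g (r \<odot>\<^bsub>C\<^esub> c) = hit_tens g (map (\<lambda>(a, b). (r \<odot>\<^bsub>C\<^esub> a, b)) (\<Delta> c))"
      unfolding hit_def using hit_tens_resp[OF g Delta_sm[OF r c]] .
    also have "\<dots> = lsum C (map (\<lambda>x. r \<odot>\<^bsub>C\<^esub> x) (map (\<lambda>(a, b). rmult C a (g b)) (\<Delta> c)))"
      unfolding hit_tens_def using Delta_set[OF c] g r
      by (auto simp: comp_def sm_rm intro!: lsum_cong_map)
    also have "\<dots> = r \<odot>\<^bsub>C\<^esub> hit g c"
      unfolding hit_def hit_tens_def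
      by (rule additive_lsum[OF additive_smult[OF r], symmetric]) (use Delta_set[OF c] g r in auto)
    finally show ?thesis .
  qed
qed

lemma eps_hit: "g \<in> ldual R C \<Longrightarrow> c \<in> carrier C \<Longrightarrow> \<epsilon> (hit g c) = g c"
proof -
  assume g: "g \<in> ldual R C" and c: "c \<in> carrier C"
  have "\<epsilon> (hit g c) = lsum R (map \<epsilon> (map (\<lambda>(a, b). rmult C a (g b)) (\<Delta> c)))"
    unfolding hit_def hit_tens_def by (rule eps_lsum) (use Delta_set[OF c] g in auto)
  also have "\<dots> = lsum R (map g (map (\<lambda>(a, b). \<epsilon> a \<odot>\<^bsub>C\<^esub> b) (\<Delta> c)))"
    using Delta_set[OF c] g by (auto simp: eps_rm ldual_sm intro!: lsum_cong_map)
  also have "\<dots> = g (lsum C (map (\<lambda>(a, b). \<epsilon> a \<odot>\<^bsub>C\<^esub> b) (\<Delta> c)))"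
    by (rule ldual_lsum[symmetric]) (use Delta_set[OF c] g in auto)
  finally show ?thesis by (simp add: counit c)
qed

lemma dual_mult_unit: "g \<in> ldual R C \<Longrightarrow> r \<in> carrier R \<Longrightarrow> c \<in> carrier C \<Longrightarrow>
   dual_mult R C \<Delta> g (dual_unit R C \<epsilon> r) c = g c \<otimes>\<^bsub>R\<^esub> r"
  by (simp add: dual_mult_eval dual_unit_def eps_hit linear_closed[OF hit_linear])

abbreviation "S \<equiv> dual_ring R C \<Delta> \<epsilon>"

lemma S_carrier[simp]: "carrier S = ldual R C" by (simp add: dual_ring_def)
lemma S_mult[simp]: "mult S = dual_mult R C \<Delta>" by (simp add: dual_ring_def)
lemma rmod_carrier[simp]: "carrier (dual_rmod R C \<Delta> \<epsilon>) = ldual R C" by (simp add: dual_rmod_def)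
lemma rmod_ract[simp]: "ract (dual_rmod R C \<Delta> \<epsilon>) = dual_mult R C \<Delta>" by (simp add: dual_rmod_def)
lemma lsum_rmod: "lsum (dual_rmod R C \<Delta> \<epsilon>) xs = lsum S xs"
  by (simp add: lsum_def dual_rmod_def dual_ring_def)

lemma lsum_S_eval: "c \<in> carrier C \<Longrightarrow> lsum S fs c = lsum R (map (\<lambda>u. u c) fs)"
  by (induct fs) (auto simp: dual_ring_def)

lemma lsum_S_ext: "lsum S fs \<in> extensional (carrier C)"
  by (cases fs) (auto simp: dual_ring_def)

end

section \<open>Rational elements and exactness of Rat\<close>

context coring_struct
begin

definition rat_expansion :: "('c \<Rightarrow> 'r, 'm) rmodule \<Rightarrow> 'm \<Rightarrow> ('m \<times> 'c) list \<Rightarrow> bool" where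
  "rat_expansion M m xs \<longleftrightarrow> set xs \<subseteq> carrier M \<times> carrier C \<and>
     (\<forall>h\<in>ldual R C. ract M m h = lsum M (map (\<lambda>(n, c). ract M n (dual_unit R C \<epsilon> (h c))) xs))"

lemma Rat_iff: "m \<in> Rat R C \<Delta> \<epsilon> M \<longleftrightarrow> m \<in> carrier M \<and> (\<exists>xs. rat_expansion M m xs)"
  unfolding Rat_def rat_expansion_def by blast

lemma Rat_hom_image:
  assumes L: "right_module S L" and M: "right_module S M" and f: "rmod_hom S L M f"
    and l: "l \<in> Rat R C \<Delta> \<epsilon> L"
  shows "f l \<in> Rat R C \<Delta> \<epsilon> M"
proof -
  obtain xs where l1: "l \<in> carrier L" and xs: "rat_expansion L l xs"
    using l by (auto simp: Rat_iff)
  have xsC: "set xs \<subseteq> carrier L \<times> carrier C" using xs by (simp add: rat_expansion_def)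
  have "rat_expansion M (f l) (map (\<lambda>(n, c). (f n, c)) xs)"
    unfolding rat_expansion_def
  proof (intro conjI ballI)
    show "set (map (\<lambda>(n, c). (f n, c)) xs) \<subseteq> carrier M \<times> carrier C"
      using xsC hom_closed[OF f] by auto
    fix h assume h: "h \<in> ldual R C"
    have "ract M (f l) h = f (ract L l h)"
      using hom_ract[OF f l1, of h] h by simp
    also have "\<dots> = f (lsum L (map (\<lambda>(n, c). ract L n (dual_unit R C \<epsilon> (h c))) xs))"
      using xs h unfolding rat_expansion_def by simp
    also have "\<dots> = lsum M (map f (map (\<lambda>(n, c). ract L n (dual_unit R C \<epsilon> (h c))) xs))"
      by (rule hom_lsum[OF L M f]) (use xsC h rm_parts(3)[OF L] dual_unit_ldual in auto)
    also have "\<dots> = lsum M (map (\<lambda>(n, c). ract M n (dual_unit R C \<epsilon> (h c))) (map (\<lambda>(n, c). (f n, c)) xs))"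
      unfolding map_map by (rule lsum_cong_map) (use xsC h hom_ract[OF f] dual_unit_ldual in auto)
    finally show "ract M (f l) h = \<dots>" .
  qed
  then show ?thesis using hom_closed[OF f l1] by (auto simp: Rat_iff)
qed

lemma rat_fixed_near_unit:
  assumes M: "right_module S M" and m: "m \<in> carrier M" and xs: "rat_expansion M m xs"
    and g: "g \<in> ldual R C" and near: "\<And>c. c \<in> snd ` set xs \<Longrightarrow> g c = \<epsilon> c"
  shows "ract M m g = m"
proof -
  have xsC: "set xs \<subseteq> carrier M \<times> carrier C" using xs by (simp add: rat_expansion_def)
  have "ract M m g = lsum M (map (\<lambda>(n, c). ract M n (dual_unit R C \<epsilon> (g c))) xs)"
    using xs g by (simp add: rat_expansion_def)
  also have "\<dots> = lsum M (map (\<lambda>(n, c). ract M n (dual_unit R C \<epsilon> ((\<lambda>c\<in>carrier C. \<epsilon> c) c))) xs)"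
    by (rule lsum_cong_map) (use near xsC in force)
  also have "\<dots> = ract M m (\<lambda>c\<in>carrier C. \<epsilon> c)"
    using xs one_ldual by (simp add: rat_expansion_def)
  also have "\<dots> = m"
    using rm_parts(6)[OF M m] by (simp add: dual_ring_def)
  finally show ?thesis .
qed

lemma ract_rational:
  assumes L: "right_module S L" and l: "l \<in> carrier L"
    and g: "g \<in> Rat R C \<Delta> \<epsilon> (dual_rmod R C \<Delta> \<epsilon>)"
  shows "ract L l g \<in> Rat R C \<Delta> \<epsilon> L"
proof -
  interpret S: ring S by (rule rm_parts(1)[OF L])
  obtain ys where g1: "g \<in> ldual R C" and ys: "rat_expansion (dual_rmod R C \<Delta> \<epsilon>) g ys"
    using g by (auto simp: Rat_iff)
  have ysC: "set ys \<subseteq> ldual R C \<times> carrier C" using ys by (simp add: rat_expansion_def)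
  have prod: "dual_mult R C \<Delta> n (dual_unit R C \<epsilon> (h c)) \<in> ldual R C"
    if "(n, c) \<in> set ys" "h \<in> ldual R C" for n c h
    using S.m_closed[of n "dual_unit R C \<epsilon> (h c)"] that ysC dual_unit_ldual by auto
  have "rat_expansion L (ract L l g) (map (\<lambda>(n, c). (ract L l n, c)) ys)"
    unfolding rat_expansion_def
  proof (intro conjI ballI)
    show "set (map (\<lambda>(n, c). (ract L l n, c)) ys) \<subseteq> carrier L \<times> carrier C"
      using ysC rm_parts(3)[OF L l] by auto
    fix h assume h: "h \<in> ldual R C"
    have "ract L (ract L l g) h = ract L l (dual_mult R C \<Delta> g h)"
      using rm_parts(4)[OF L l, of g h] g1 h by simp
    also have "\<dots> = ract L l (lsum S (map (\<lambda>(n, c). dual_mult R C \<Delta> n (dual_unit R C \<epsilon> (h c))) ys))"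
      using ys h by (simp add: rat_expansion_def lsum_rmod)
    also have "\<dots> = lsum L (map (ract L l) (map (\<lambda>(n, c). dual_mult R C \<Delta> n (dual_unit R C \<epsilon> (h c))) ys))"
      by (rule rm_lsum[OF L l]) (use prod h in auto)
    also have "\<dots> = lsum L (map (\<lambda>(n, c). ract L n (dual_unit R C \<epsilon> (h c))) (map (\<lambda>(n, c). (ract L l n, c)) ys))"
    proof -
      have "ract L l (dual_mult R C \<Delta> n (dual_unit R C \<epsilon> (h c))) = ract L (ract L l n) (dual_unit R C \<epsilon> (h c))"
        if "(n, c) \<in> set ys" for n c
        using rm_parts(4)[OF L l, of n "dual_unit R C \<epsilon> (h c)"] that ysC h dual_unit_ldual by auto
      then show ?thesis unfolding map_map by (auto intro!: lsum_cong_map)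
    qed
    finally show "ract L (ract L l g) h = \<dots>" .
  qed
  then show ?thesis using rm_parts(3)[OF L l] g1 by (auto simp: Rat_iff)
qed

text \<open>If Rat(*C) is dense in the finite topology then Rat preserves exactness of
  L \<rightarrow> M \<rightarrow> N: a rational x \<in> ker g = im f has the rational preimage l \<cdot> g0, where
  f l = x and g0 is a rational functional close enough to \<epsilon> to fix x.\<close>
lemma exact_from_dense:
  assumes dense: "dense_finite_top R C (Rat R C \<Delta> \<epsilon> (dual_rmod R C \<Delta> \<epsilon>))"
    and L: "right_module S L" and M: "right_module S M"
    and f: "rmod_hom S L M f"
    and ex: "f ` carrier L = {x \<in> carrier M. g x = \<zero>\<^bsub>N\<^esub>}"
  shows "f ` Rat R C \<Delta> \<epsilon> L = {x \<in> Rat R C \<Delta> \<epsilon> M. g x = \<zero>\<^bsub>N\<^esub>}"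
proof (intro equalityI subsetI)
  fix y assume "y \<in> f ` Rat R C \<Delta> \<epsilon> L"
  then obtain l where l: "l \<in> Rat R C \<Delta> \<epsilon> L" and y: "y = f l" by blast
  have "g y = \<zero>\<^bsub>N\<^esub>" using ex y l by (auto simp: Rat_def)
  then show "y \<in> {x \<in> Rat R C \<Delta> \<epsilon> M. g x = \<zero>\<^bsub>N\<^esub>}"
    using Rat_hom_image[OF L M f l] y by blast
next
  fix x assume "x \<in> {x \<in> Rat R C \<Delta> \<epsilon> M. g x = \<zero>\<^bsub>N\<^esub>}"
  then obtain xs where x: "x \<in> carrier M" "g x = \<zero>\<^bsub>N\<^esub>" and xs: "rat_expansion M x xs"
    by (auto simp: Rat_iff)
  obtain l where l: "l \<in> carrier L" and fl: "f l = x" using ex x by (metis (mono_tags, lifting) image_iff mem_Collect_eq)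
  have F: "finite (snd ` set xs)" "snd ` set xs \<subseteq> carrier C"
    using xs by (auto simp: rat_expansion_def)
  obtain g0 where g0n: "g0 \<in> fin_nbhd R C (\<lambda>c\<in>carrier C. \<epsilon> c) (snd ` set xs)"
    and g0r: "g0 \<in> Rat R C \<Delta> \<epsilon> (dual_rmod R C \<Delta> \<epsilon>)"
    using dense one_ldual F unfolding dense_finite_top_def by blast
  have g0: "g0 \<in> ldual R C" using g0n unfolding fin_nbhd_def by blast
  have near: "g0 c = \<epsilon> c" if c: "c \<in> snd ` set xs" for c
  proof -
    have "g0 c = (\<lambda>c\<in>carrier C. \<epsilon> c) c" using g0n c unfolding fin_nbhd_def by blast
    then show ?thesis using c F(2) by auto
  qed
  have "f (ract L l g0) = x"
    using hom_ract[OF f l] g0 fl rat_fixed_near_unit[OF M x(1) xs g0 near] by simp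
  then show "x \<in> f ` Rat R C \<Delta> \<epsilon> L" using ract_rational[OF L l g0r] by blast
qed

section \<open>Functionals factoring through a finitely generated projection are rational\<close>

text \<open>The endomorphism c \<mapsto> \<Sum> \<phi>_k(c) y_k attached to a finite family of pairs
  (\<phi>_k, y_k) \<in> *C \<times> C; the left \<alpha>-condition says it can be made to fix any finite set.\<close>
definition dual_basis_map :: "(('c \<Rightarrow> 'r) \<times> 'c) list \<Rightarrow> 'c \<Rightarrow> 'c" where
  "dual_basis_map ps c = lsum C (map (\<lambda>(\<phi>, y). \<phi> c \<odot>\<^bsub>C\<^esub> y) ps)"

lemma dual_basis_map_linear:
  assumes ps: "set ps \<subseteq> ldual R C \<times> carrier C"
  shows "left_linear (dual_basis_map ps)"
proof (rule left_linearI)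
  fix c assume c: "c \<in> carrier C"
  show "dual_basis_map ps c \<in> carrier C"
    unfolding dual_basis_map_def by (rule C.lsum_closed) (use ps c in auto)
next
  fix c d assume c: "c \<in> carrier C" and d: "d \<in> carrier C"
  have "dual_basis_map ps (c \<oplus>\<^bsub>C\<^esub> d) =
      lsum C (map (\<lambda>p. (\<lambda>(\<phi>, y). \<phi> c \<odot>\<^bsub>C\<^esub> y) p \<oplus>\<^bsub>C\<^esub> (\<lambda>(\<phi>, y). \<phi> d \<odot>\<^bsub>C\<^esub> y) p) ps)"
    unfolding dual_basis_map_def
    by (rule lsum_cong_map) (use ps c d in \<open>auto simp: ldual_add sm_ldistr\<close>)
  also have "\<dots> = dual_basis_map ps c \<oplus>\<^bsub>C\<^esub> dual_basis_map ps d"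
    unfolding dual_basis_map_def by (rule C.lsum_map_add) (use ps c d in auto)
  finally show "dual_basis_map ps (c \<oplus>\<^bsub>C\<^esub> d) = dual_basis_map ps c \<oplus>\<^bsub>C\<^esub> dual_basis_map ps d" .
next
  fix r c assume r: "r \<in> carrier R" and c: "c \<in> carrier C"
  have "dual_basis_map ps (r \<odot>\<^bsub>C\<^esub> c) = lsum C (map (\<lambda>x. r \<odot>\<^bsub>C\<^esub> x) (map (\<lambda>(\<phi>, y). \<phi> c \<odot>\<^bsub>C\<^esub> y) ps))"
    unfolding dual_basis_map_def map_map
    by (rule lsum_cong_map) (use ps c r in \<open>auto simp: ldual_sm sm_assoc\<close>)
  also have "\<dots> = r \<odot>\<^bsub>C\<^esub> dual_basis_map ps c"
    unfolding dual_basis_map_def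
    by (rule additive_lsum[OF additive_smult[OF r], symmetric]) (use ps c in auto)
  finally show "dual_basis_map ps (r \<odot>\<^bsub>C\<^esub> c) = r \<odot>\<^bsub>C\<^esub> dual_basis_map ps c" .
qed

lemma dual_basis_map_span:
  assumes ps: "set ps \<subseteq> ldual R C \<times> carrier C"
    and rs: "length rs = length hs" "set rs \<subseteq> carrier R"
    and hs: "set hs \<subseteq> carrier C" "\<forall>h\<in>set hs. dual_basis_map ps h = h"
  shows "dual_basis_map ps (lsum C (map2 (\<lambda>r g. r \<odot>\<^bsub>C\<^esub> g) rs hs)) = lsum C (map2 (\<lambda>r g. r \<odot>\<^bsub>C\<^esub> g) rs hs)"
  using rs hs
proof (induct rs hs rule: list_induct2)
  case Nil
  then show ?case using additive_zero[OF linear_additive[OF dual_basis_map_linear[OF ps]]] by simp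
next
  case (Cons r rs h hs)
  note Q = dual_basis_map_linear[OF ps]
  have "set (map2 (\<lambda>r g. r \<odot>\<^bsub>C\<^esub> g) rs hs) \<subseteq> carrier C"
  proof
    fix y assume "y \<in> set (map2 (\<lambda>r g. r \<odot>\<^bsub>C\<^esub> g) rs hs)"
    then obtain a b where ab: "(a, b) \<in> set (zip rs hs)" and y: "y = a \<odot>\<^bsub>C\<^esub> b" by auto
    have "a \<in> carrier R" "b \<in> carrier C"
      using set_zip_leftD[OF ab] set_zip_rightD[OF ab] Cons by auto
    then show "y \<in> carrier C" using y by simp
  qed
  then have s: "lsum C (map2 (\<lambda>r g. r \<odot>\<^bsub>C\<^esub> g) rs hs) \<in> carrier C"
    by (rule C.lsum_closed)
  have rh: "r \<in> carrier R" "h \<in> carrier C" "dual_basis_map ps h = h" using Cons by auto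
  have "dual_basis_map ps (r \<odot>\<^bsub>C\<^esub> h \<oplus>\<^bsub>C\<^esub> lsum C (map2 (\<lambda>r g. r \<odot>\<^bsub>C\<^esub> g) rs hs)) =
      r \<odot>\<^bsub>C\<^esub> dual_basis_map ps h \<oplus>\<^bsub>C\<^esub> dual_basis_map ps (lsum C (map2 (\<lambda>r g. r \<odot>\<^bsub>C\<^esub> g) rs hs))"
    using additive_add[OF linear_additive[OF Q] _ s] linear_sm[OF Q] rh by simp
  then show ?case using Cons rh by simp
qed

text \<open>Then f \<circ> P is rational, with expansion given by the pairs (\<phi>_k \<circ> P, hit f y_k).\<close>
lemma rational_through_projection:
  assumes f: "f \<in> ldual R C" and P: "left_linear P"
    and hit_P: "\<And>c. c \<in> carrier C \<Longrightarrow> hit (\<lambda>c\<in>carrier C. f (P c)) c = hit f (P c)"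
    and ps: "set ps \<subseteq> ldual R C \<times> carrier C"
    and fixed: "\<And>c. c \<in> carrier C \<Longrightarrow> dual_basis_map ps (P c) = P c"
  shows "(\<lambda>c\<in>carrier C. f (P c)) \<in> Rat R C \<Delta> \<epsilon> (dual_rmod R C \<Delta> \<epsilon>)"
proof -
  define m where "m = (\<lambda>c\<in>carrier C. f (P c))"
  define xs where "xs = map (\<lambda>(\<phi>, y). ((\<lambda>c\<in>carrier C. \<phi> (P c)), hit f y)) ps"
  have m: "m \<in> ldual R C" unfolding m_def by (rule linear_ldual[OF P f])
  have xs: "set xs \<subseteq> ldual R C \<times> carrier C"
    unfolding xs_def using ps f linear_ldual[OF P] linear_closed[OF hit_linear] by auto
  have expand: "dual_mult R C \<Delta> m h c =
      lsum S (map (\<lambda>(n, c). dual_mult R C \<Delta> n (dual_unit R C \<epsilon> (h c))) xs) c"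
    if h: "h \<in> ldual R C" and c: "c \<in> carrier C" for h c
  proof -
    have Pc: "P c \<in> carrier C" using linear_closed[OF P c] .
    have terms: "set (map (\<lambda>(\<phi>, y). \<phi> (P c) \<odot>\<^bsub>C\<^esub> y) ps) \<subseteq> carrier C"
      using ps Pc by auto
    have "dual_mult R C \<Delta> m h c = h (hit f (dual_basis_map ps (P c)))"
      using dual_mult_eval[OF c] hit_P[OF c] fixed[OF c] by (simp add: m_def)
    also have "\<dots> = h (lsum C (map (\<lambda>(\<phi>, y). \<phi> (P c) \<odot>\<^bsub>C\<^esub> hit f y) ps))"
      unfolding dual_basis_map_def additive_lsum[OF linear_additive[OF hit_linear[OF f]] terms] map_map
      by (rule arg_cong[where f=h], rule lsum_cong_map) (use ps Pc linear_sm[OF hit_linear[OF f]] in auto)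
    also have "\<dots> = lsum R (map (\<lambda>(\<phi>, y). \<phi> (P c) \<otimes>\<^bsub>R\<^esub> h (hit f y)) ps)"
      using ps Pc f h
      by (subst ldual_lsum[OF h]) (auto simp: ldual_sm linear_closed[OF hit_linear] intro!: lsum_cong_map)
    also have "\<dots> = lsum R (map (\<lambda>u. u c) (map (\<lambda>(n, c). dual_mult R C \<Delta> n (dual_unit R C \<epsilon> (h c))) xs))"
      unfolding xs_def map_map
      by (rule lsum_cong_map)
        (use ps Pc f h c linear_ldual[OF P] in \<open>auto simp: dual_mult_unit linear_closed[OF hit_linear]\<close>)
    finally show ?thesis by (simp add: lsum_S_eval[OF c])
  qed
  have "rat_expansion (dual_rmod R C \<Delta> \<epsilon>) m xs"
    unfolding rat_expansion_def rmod_ract lsum_rmod rmod_carrier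
    using xs expand by (auto intro!: extensionalityI[OF _ lsum_S_ext] simp: dual_mult_def)
  then show ?thesis using m unfolding Rat_iff rmod_carrier m_def by blast
qed

end

section \<open>Projections of a direct sum of left subcomodules\<close>

locale comodule_decomposition = coring_struct R C \<Delta> \<epsilon>
  for R :: "'r ring" and C :: "('r, 'c) bimod" and \<Delta> :: "'c \<Rightarrow> ('c \<times> 'c) list" and \<epsilon> :: "'c \<Rightarrow> 'r" +
  fixes I :: "'i set" and D :: "'i \<Rightarrow> 'c set"
  assumes alpha: "left_alpha R C"
    and direct_sum: "internal_direct_sum C I D"
    and subcomodule: "\<forall>i\<in>I. left_subcomodule R C \<Delta> (D i)"
    and fin_gen: "\<forall>i\<in>I. fin_gen_left R C (D i)"
begin

lemma D_sub: "i \<in> I \<Longrightarrow> D i \<subseteq> carrier C"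
  using subcomodule unfolding left_subcomodule_def left_submodule_def by blast
lemma D_zero: "i \<in> I \<Longrightarrow> \<zero>\<^bsub>C\<^esub> \<in> D i"
  using subcomodule unfolding left_subcomodule_def left_submodule_def by blast
lemma D_add: "i \<in> I \<Longrightarrow> a \<in> D i \<Longrightarrow> b \<in> D i \<Longrightarrow> a \<oplus>\<^bsub>C\<^esub> b \<in> D i"
  using subcomodule unfolding left_subcomodule_def left_submodule_def by blast
lemma D_sm: "i \<in> I \<Longrightarrow> r \<in> carrier R \<Longrightarrow> a \<in> D i \<Longrightarrow> r \<odot>\<^bsub>C\<^esub> a \<in> D i"
  using subcomodule unfolding left_subcomodule_def left_submodule_def by blast
lemma D_neg:
  assumes i: "i \<in> I" and a: "a \<in> D i"
  shows "\<ominus>\<^bsub>C\<^esub> a \<in> D i"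
proof -
  have "a \<in> carrier C" using D_sub[OF i] a by blast
  then show ?thesis using D_sm[OF i _ a, of "\<ominus>\<^bsub>R\<^esub> \<one>\<^bsub>R\<^esub>"] by (simp add: sm_neg)
qed
lemma D_coaction: "i \<in> I \<Longrightarrow> c \<in> D i \<Longrightarrow> \<exists>xs. set xs \<subseteq> carrier C \<times> D i \<and> tens2_eq R C (\<Delta> c) xs"
  using subcomodule unfolding left_subcomodule_def by blast

definition decomp :: "'c \<Rightarrow> 'i set \<Rightarrow> ('i \<Rightarrow> 'c) \<Rightarrow> bool" where
  "decomp c J x \<longleftrightarrow> finite J \<and> J \<subseteq> I \<and> (\<forall>i\<in>J. x i \<in> D i) \<and> c = finsum C x J"

definition extend_zero :: "'i set \<Rightarrow> ('i \<Rightarrow> 'c) \<Rightarrow> 'i \<Rightarrow> 'c" where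
  "extend_zero J x i = (if i \<in> J then x i else \<zero>\<^bsub>C\<^esub>)"

lemma decomp_exists: "c \<in> carrier C \<Longrightarrow> \<exists>J x. decomp c J x"
  using direct_sum unfolding internal_direct_sum_def decomp_def by blast

lemma decomp_fun: "decomp c J x \<Longrightarrow> x \<in> J \<rightarrow> carrier C"
  unfolding decomp_def using D_sub by blast

lemma extend_zero_closed: "decomp c J x \<Longrightarrow> extend_zero J x i \<in> carrier C"
  unfolding extend_zero_def using decomp_fun by auto

lemma extend_zero_sum: "decomp c J x \<Longrightarrow> finite K \<Longrightarrow> J \<subseteq> K \<Longrightarrow> finsum C (extend_zero J x) K = c"
proof -
  assume d: "decomp c J x" and K: "finite K" "J \<subseteq> K"
  have "finsum C (extend_zero J x) K = finsum C x J"
    by (rule C.add.finprod_mono_neutral_cong_right)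
      (use K d decomp_fun[OF d] in \<open>auto simp: extend_zero_def decomp_def\<close>)
  then show ?thesis using d by (simp add: decomp_def)
qed

lemma decomp_unique:
  assumes d1: "decomp c J x" and d2: "decomp c J' y"
  shows "extend_zero J x = extend_zero J' y"
proof
  fix i
  define K where "K = J \<union> J'"
  have K: "finite K" "K \<subseteq> I" "J \<subseteq> K" "J' \<subseteq> K" using d1 d2 by (auto simp: K_def decomp_def)
  define w where "w j = extend_zero J x j \<oplus>\<^bsub>C\<^esub> \<ominus>\<^bsub>C\<^esub> extend_zero J' y j" for j
  have c: "c \<in> carrier C" using d1 decomp_fun[OF d1] by (auto simp: decomp_def)
  have e: "extend_zero J x \<in> K \<rightarrow> carrier C" "extend_zero J' y \<in> K \<rightarrow> carrier C"
    using extend_zero_closed[OF d1] extend_zero_closed[OF d2] by auto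
  have "finsum C w K = finsum C (extend_zero J x) K \<oplus>\<^bsub>C\<^esub> finsum C (\<lambda>j. \<ominus>\<^bsub>C\<^esub> extend_zero J' y j) K"
    unfolding w_def by (rule C.finsum_addf) (use e in auto)
  also have "\<dots> = c \<oplus>\<^bsub>C\<^esub> \<ominus>\<^bsub>C\<^esub> c"
    using extend_zero_sum[OF d1 K(1,3)] extend_zero_sum[OF d2 K(1,4)] C.finsum_neg[OF e(2)] by simp
  finally
  have w0: "finsum C w K = \<zero>\<^bsub>C\<^esub>" using c by (simp add: C.r_neg)
  have wD: "\<forall>j\<in>K. w j \<in> D j"
  proof
    fix j assume "j \<in> K"
    then have j: "j \<in> I" using K by auto
    have "extend_zero J x j \<in> D j" "extend_zero J' y j \<in> D j"
      using d1 d2 j D_zero by (auto simp: extend_zero_def decomp_def)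
    then show "w j \<in> D j" unfolding w_def using D_add[OF j] D_neg[OF j] by blast
  qed
  show "extend_zero J x i = extend_zero J' y i"
  proof (cases "i \<in> K")
    case True
    have "w i = \<zero>\<^bsub>C\<^esub>"
      using direct_sum K(1,2) wD w0 True unfolding internal_direct_sum_def by blast
    then show ?thesis unfolding w_def
      by (rule C.eq_if_diff_zero[OF extend_zero_closed[OF d1] extend_zero_closed[OF d2]])
  next
    case False
    then show ?thesis by (auto simp: extend_zero_def K_def)
  qed
qed

definition coord :: "'c \<Rightarrow> 'i \<Rightarrow> 'c" where
  "coord c = (SOME z. \<exists>J x. decomp c J x \<and> z = extend_zero J x)"

lemma coord_eq: "decomp c J x \<Longrightarrow> coord c = extend_zero J x"
proof -
  assume d: "decomp c J x"
  have "\<exists>z J x. decomp c J x \<and> z = extend_zero J x" using d by blast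
  then have "\<exists>J' x'. decomp c J' x' \<and> coord c = extend_zero J' x'"
    unfolding coord_def by (rule someI_ex)
  then show ?thesis using decomp_unique d by metis
qed

lemma coord_support: "c \<in> carrier C \<Longrightarrow> \<exists>J. finite J \<and> J \<subseteq> I \<and> (\<forall>i. i \<notin> J \<longrightarrow> coord c i = \<zero>\<^bsub>C\<^esub>) \<and>
   (\<forall>i\<in>J. coord c i \<in> D i) \<and> (\<forall>K. finite K \<and> J \<subseteq> K \<longrightarrow> finsum C (coord c) K = c)"
proof -
  assume c: "c \<in> carrier C"
  obtain J x where d: "decomp c J x" using decomp_exists[OF c] by blast
  then show ?thesis
    using coord_eq[OF d] extend_zero_sum[OF d] by (intro exI[of _ J]) (auto simp: decomp_def extend_zero_def)
qed

lemma coord_D: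
  assumes c: "c \<in> carrier C" and i: "i \<in> I"
  shows "coord c i \<in> D i"
proof -
  obtain J where "\<forall>i. i \<notin> J \<longrightarrow> coord c i = \<zero>\<^bsub>C\<^esub>" "\<forall>i\<in>J. coord c i \<in> D i"
    using coord_support[OF c] by blast
  then show ?thesis using D_zero[OF i] by (cases "i \<in> J") auto
qed

lemma coord_closed:
  assumes c: "c \<in> carrier C"
  shows "coord c \<in> K \<rightarrow> carrier C"
proof
  fix i
  obtain J where "J \<subseteq> I" "\<forall>i. i \<notin> J \<longrightarrow> coord c i = \<zero>\<^bsub>C\<^esub>" "\<forall>i\<in>J. coord c i \<in> D i"
    using coord_support[OF c] by blast
  then show "coord c i \<in> carrier C" using D_sub by (cases "i \<in> J") (blast, simp)
qed

lemma coord_add: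
  assumes c: "c \<in> carrier C" and d: "d \<in> carrier C"
  shows "coord (c \<oplus>\<^bsub>C\<^esub> d) i = coord c i \<oplus>\<^bsub>C\<^esub> coord d i"
proof -
  obtain J1 where J1: "finite J1" "J1 \<subseteq> I" "\<forall>i. i \<notin> J1 \<longrightarrow> coord c i = \<zero>\<^bsub>C\<^esub>"
    "\<forall>K. finite K \<and> J1 \<subseteq> K \<longrightarrow> finsum C (coord c) K = c" using coord_support[OF c] by blast
  obtain J2 where J2: "finite J2" "J2 \<subseteq> I" "\<forall>i. i \<notin> J2 \<longrightarrow> coord d i = \<zero>\<^bsub>C\<^esub>"
    "\<forall>K. finite K \<and> J2 \<subseteq> K \<longrightarrow> finsum C (coord d) K = d" using coord_support[OF d] by blast
  define K where "K = J1 \<union> J2"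
  define z where "z i = coord c i \<oplus>\<^bsub>C\<^esub> coord d i" for i
  have K: "finite K" "K \<subseteq> I" using J1 J2 by (auto simp: K_def)
  have "finsum C z K = c \<oplus>\<^bsub>C\<^esub> d"
    unfolding z_def using coord_closed[OF c] coord_closed[OF d] J1(4) J2(4) K
    by (simp add: C.finsum_addf K_def)
  then have "decomp (c \<oplus>\<^bsub>C\<^esub> d) K z"
    unfolding decomp_def z_def using K coord_D[OF c] coord_D[OF d] D_add by auto
  then have "coord (c \<oplus>\<^bsub>C\<^esub> d) = extend_zero K z" by (rule coord_eq)
  then show ?thesis using J1(3) J2(3) by (auto simp: extend_zero_def z_def K_def)
qed

lemma coord_sm:
  assumes r: "r \<in> carrier R" and c: "c \<in> carrier C"
  shows "coord (r \<odot>\<^bsub>C\<^esub> c) i = r \<odot>\<^bsub>C\<^esub> coord c i"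
proof -
  obtain J where J: "finite J" "J \<subseteq> I" "\<forall>i. i \<notin> J \<longrightarrow> coord c i = \<zero>\<^bsub>C\<^esub>"
    "\<forall>K. finite K \<and> J \<subseteq> K \<longrightarrow> finsum C (coord c) K = c" using coord_support[OF c] by blast
  have "finsum C (\<lambda>i. r \<odot>\<^bsub>C\<^esub> coord c i) J = r \<odot>\<^bsub>C\<^esub> c"
    using finsum_sm[OF r coord_closed[OF c]] J(1,4) by simp
  then have "decomp (r \<odot>\<^bsub>C\<^esub> c) J (\<lambda>i. r \<odot>\<^bsub>C\<^esub> coord c i)"
    unfolding decomp_def using J coord_D[OF c] D_sm[OF _ r] by auto
  then have eq: "coord (r \<odot>\<^bsub>C\<^esub> c) = extend_zero J (\<lambda>i. r \<odot>\<^bsub>C\<^esub> coord c i)" by (rule coord_eq)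
  show ?thesis
  proof (cases "i \<in> J")
    case True
    then show ?thesis using eq by (simp add: extend_zero_def)
  next
    case False
    then have "coord c i = \<zero>\<^bsub>C\<^esub>" using J(3) by blast
    then show ?thesis using False eq r by (simp add: extend_zero_def)
  qed
qed

lemma coord_single:
  assumes i: "i \<in> I" and x: "x \<in> D i"
  shows "coord x = (\<lambda>j. if j = i then x else \<zero>\<^bsub>C\<^esub>)"
proof -
  have "decomp x {i} (\<lambda>_. x)" unfolding decomp_def using i x D_sub[OF i] by auto
  then have "coord x = extend_zero {i} (\<lambda>_. x)" by (rule coord_eq)
  then show ?thesis by (auto simp: extend_zero_def)
qed

definition proj :: "'i set \<Rightarrow> 'c \<Rightarrow> 'c" where "proj J c = finsum C (coord c) J"

lemma proj_linear: "left_linear (proj J)"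
proof (rule left_linearI)
  show "proj J c \<in> carrier C" if "c \<in> carrier C" for c
    unfolding proj_def using coord_closed[OF that] by (intro C.finsum_closed)
  show "proj J (c \<oplus>\<^bsub>C\<^esub> d) = proj J c \<oplus>\<^bsub>C\<^esub> proj J d" if "c \<in> carrier C" "d \<in> carrier C" for c d
    unfolding proj_def coord_add[OF that]
    by (rule C.finsum_addf) (use coord_closed that in auto)
  show "proj J (r \<odot>\<^bsub>C\<^esub> c) = r \<odot>\<^bsub>C\<^esub> proj J c" if "r \<in> carrier R" "c \<in> carrier C" for r c
    unfolding proj_def coord_sm[OF that] by (rule finsum_sm[OF that(1) coord_closed[OF that(2)]])
qed

lemma proj_single:
  assumes i: "i \<in> I" and x: "x \<in> D i" and J: "finite J"
  shows "proj J x = (if i \<in> J then x else \<zero>\<^bsub>C\<^esub>)"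
proof -
  have xC: "x \<in> carrier C" using x D_sub[OF i] by auto
  have "proj J x = finsum C (\<lambda>j. if j = i then x else \<zero>\<^bsub>C\<^esub>) J"
    unfolding proj_def coord_single[OF i x] ..
  also have "\<dots> = (if i \<in> J then x else \<zero>\<^bsub>C\<^esub>)"
  proof (cases "i \<in> J")
    case True
    have "finsum C (\<lambda>j. if j = i then x else \<zero>\<^bsub>C\<^esub>) J = finsum C (\<lambda>_. x) {i}"
      by (rule C.add.finprod_mono_neutral_cong_right) (use J True xC in auto)
    then show ?thesis using True xC by simp
  next
    case False
    have "finsum C (\<lambda>j. if j = i then x else \<zero>\<^bsub>C\<^esub>) J = finsum C (\<lambda>_. \<zero>\<^bsub>C\<^esub>) J"
      by (rule C.finsum_cong') (use False in auto)
    then show ?thesis using False by simp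
  qed
  finally show ?thesis .
qed

lemma proj_fixes_finite:
  assumes F: "finite F" "F \<subseteq> carrier C"
  shows "\<exists>J. finite J \<and> J \<subseteq> I \<and> (\<forall>c\<in>F. proj J c = c)"
proof -
  have "\<forall>c\<in>F. \<exists>J. finite J \<and> J \<subseteq> I \<and> (\<forall>K. finite K \<and> J \<subseteq> K \<longrightarrow> finsum C (coord c) K = c)"
  proof
    fix c assume "c \<in> F"
    then have "c \<in> carrier C" using F(2) by blast
    from coord_support[OF this] show "\<exists>J. finite J \<and> J \<subseteq> I \<and> (\<forall>K. finite K \<and> J \<subseteq> K \<longrightarrow> finsum C (coord c) K = c)"
      by blast
  qed
  then obtain Jc where Jc: "\<And>c. c \<in> F \<Longrightarrow> finite (Jc c)" "\<And>c. c \<in> F \<Longrightarrow> Jc c \<subseteq> I"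
    "\<And>c K. c \<in> F \<Longrightarrow> finite K \<Longrightarrow> Jc c \<subseteq> K \<Longrightarrow> finsum C (coord c) K = c"
    by (metis (no_types))
  define J where "J = (\<Union>c\<in>F. Jc c)"
  have J: "finite J" "J \<subseteq> I" using F(1) Jc(1,2) unfolding J_def by auto
  have "proj J c = c" if c: "c \<in> F" for c
    unfolding proj_def by (rule Jc(3)[OF c J(1)]) (use c in \<open>auto simp: J_def\<close>)
  then show ?thesis using J by blast
qed

text \<open>Because each D_i is a left subcomodule, precomposition with proj J commutes with
  the hit action: (f \<circ> P_J) \<rightharpoonup> c = f \<rightharpoonup> P_J c.  It suffices to check this on a single
  summand x \<in> D_i, where \<Delta> x \<in> C \<otimes> D_i and P_J is either the identity or zero on D_i.\<close>
lemma hit_proj_single: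
  assumes f: "f \<in> ldual R C" and J: "finite J" and i: "i \<in> I" and x: "x \<in> D i"
  shows "hit (\<lambda>c\<in>carrier C. f (proj J c)) x = (if i \<in> J then hit f x else \<zero>\<^bsub>C\<^esub>)"
proof -
  define m where "m = (\<lambda>c\<in>carrier C. f (proj J c))"
  have m: "m \<in> ldual R C" unfolding m_def by (rule linear_ldual[OF proj_linear f])
  obtain xs where xs: "set xs \<subseteq> carrier C \<times> D i" and eq: "tens2_eq R C (\<Delta> x) xs"
    using D_coaction[OF i x] by blast
  have mb: "m b = (if i \<in> J then f b else \<zero>\<^bsub>R\<^esub>)" if "(a, b) \<in> set xs" for a b
    using xs that D_sub[OF i] proj_single[OF i _ J] f by (auto simp: m_def)
  have "hit m x = hit_tens m xs" unfolding hit_def by (rule hit_tens_resp[OF m eq])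
  also have "\<dots> = (if i \<in> J then hit f x else \<zero>\<^bsub>C\<^esub>)"
  proof (cases "i \<in> J")
    case True
    then have "hit_tens m xs = hit_tens f xs" unfolding hit_tens_def using mb by (auto intro!: lsum_cong_map)
    then show ?thesis using True hit_tens_resp[OF f eq] by (simp add: hit_def)
  next
    case False
    then have "hit_tens m xs = lsum C (map (\<lambda>_. \<zero>\<^bsub>C\<^esub>) xs)"
      unfolding hit_tens_def using mb xs D_sub[OF i] by (auto intro!: lsum_cong_map)
    then show ?thesis using False by (simp add: C.lsum_zeros)
  qed
  finally show ?thesis unfolding m_def .
qed

lemma hit_proj:
  assumes f: "f \<in> ldual R C" and J: "finite J" "J \<subseteq> I" and c: "c \<in> carrier C"
  shows "hit (\<lambda>c\<in>carrier C. f (proj J c)) c = hit f (proj J c)"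
proof -
  define m where "m = (\<lambda>c\<in>carrier C. f (proj J c))"
  have m: "m \<in> ldual R C" unfolding m_def by (rule linear_ldual[OF proj_linear f])
  obtain J1 where J1: "finite J1" "J1 \<subseteq> I"
    "\<forall>K. finite K \<and> J1 \<subseteq> K \<longrightarrow> finsum C (coord c) K = c" using coord_support[OF c] by blast
  define K where "K = J1 \<union> J"
  have K: "finite K" "K \<subseteq> I" "J \<subseteq> K" "J1 \<subseteq> K" using J1 J by (auto simp: K_def)
  have c_sum: "finsum C (coord c) K = c" using J1(3) K by blast
  have hit_add: "additive (hit g)" if "g \<in> ldual R C" for g
    by (rule linear_additive[OF hit_linear[OF that]])
  have closed: "hit f (coord c i) \<in> carrier C" for i
    using linear_closed[OF hit_linear[OF f]] coord_closed[OF c] by blast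
  have "hit m c = hit m (finsum C (coord c) K)" using c_sum by simp
  also have "\<dots> = finsum C (\<lambda>i. hit m (coord c i)) K"
    by (rule additive_finsum[OF hit_add[OF m] coord_closed[OF c]])
  also have "\<dots> = finsum C (\<lambda>i. if i \<in> J then hit f (coord c i) else \<zero>\<^bsub>C\<^esub>) K"
  proof (rule C.finsum_cong')
    show "(\<lambda>i. if i \<in> J then hit f (coord c i) else \<zero>\<^bsub>C\<^esub>) \<in> K \<rightarrow> carrier C"
      using closed by auto
    fix i assume "i \<in> K"
    then have i: "i \<in> I" using K(2) by blast
    show "hit m (coord c i) = (if i \<in> J then hit f (coord c i) else \<zero>\<^bsub>C\<^esub>)"
      unfolding m_def by (rule hit_proj_single[OF f J(1) i coord_D[OF c i]])
  qed simp
  also have "\<dots> = finsum C (\<lambda>i. hit f (coord c i)) J"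
    by (rule C.add.finprod_mono_neutral_cong_right) (use K closed in auto)
  also have "\<dots> = hit f (proj J c)"
    unfolding proj_def by (rule additive_finsum[OF hit_add[OF f] coord_closed[OF c], symmetric])
  finally show ?thesis unfolding m_def .
qed

text \<open>Since C_J is finitely generated and C is locally projective, a single dual basis
  map fixes all of C_J: it fixes the finitely many generators, hence their R-span.\<close>
lemma proj_dual_basis:
  assumes J: "finite J" "J \<subseteq> I"
  shows "\<exists>ps. set ps \<subseteq> ldual R C \<times> carrier C \<and> (\<forall>c\<in>carrier C. dual_basis_map ps (proj J c) = proj J c)"
proof -
  have "\<forall>i\<in>I. \<exists>gs. set gs \<subseteq> D i \<and> (\<forall>c\<in>D i. \<exists>rs. length rs = length gs \<and> set rs \<subseteq> carrier R \<and>
        c = lsum C (map2 (\<lambda>r g. r \<odot>\<^bsub>C\<^esub> g) rs gs))"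
    using fin_gen unfolding fin_gen_left_def by blast
  from bchoice[OF this] obtain gs where gs: "\<forall>i\<in>I. set (gs i) \<subseteq> D i \<and> (\<forall>c\<in>D i. \<exists>rs. length rs = length (gs i) \<and>
        set rs \<subseteq> carrier R \<and> c = lsum C (map2 (\<lambda>r g. r \<odot>\<^bsub>C\<^esub> g) rs (gs i)))"
    by blast
  define G where "G = (\<Union>i\<in>J. set (gs i))"
  have G: "finite G" "G \<subseteq> carrier C"
    using J gs D_sub unfolding G_def by (simp, blast)
  obtain ps where ps: "set ps \<subseteq> ldual R C \<times> carrier C"
    and ps_fix: "\<forall>c\<in>G. c = lsum C (map (\<lambda>(f, x). f c \<odot>\<^bsub>C\<^esub> x) ps)"
    using alpha G unfolding left_alpha_def by blast
  have fixG: "dual_basis_map ps g = g" if "g \<in> G" for g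
    using ps_fix that unfolding dual_basis_map_def by auto
  note Q = dual_basis_map_linear[OF ps]
  have fixD: "dual_basis_map ps x = x" if i: "i \<in> J" and x: "x \<in> D i" for i x
  proof -
    obtain rs where rs: "length rs = length (gs i)" "set rs \<subseteq> carrier R"
      and x_eq: "x = lsum C (map2 (\<lambda>r g. r \<odot>\<^bsub>C\<^esub> g) rs (gs i))" using gs x i J by blast
    have "set (gs i) \<subseteq> G" using i unfolding G_def by auto
    then have "dual_basis_map ps (lsum C (map2 (\<lambda>r g. r \<odot>\<^bsub>C\<^esub> g) rs (gs i))) =
        lsum C (map2 (\<lambda>r g. r \<odot>\<^bsub>C\<^esub> g) rs (gs i))"
      by (intro dual_basis_map_span[OF ps rs]) (use G(2) fixG in auto)
    then show ?thesis using x_eq by simp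
  qed
  have "dual_basis_map ps (proj J c) = proj J c" if c: "c \<in> carrier C" for c
  proof -
    have "dual_basis_map ps (proj J c) = finsum C (\<lambda>i. dual_basis_map ps (coord c i)) J"
      unfolding proj_def by (rule additive_finsum[OF linear_additive[OF Q] coord_closed[OF c]])
    also have "\<dots> = proj J c"
      unfolding proj_def using fixD coord_D[OF c] J(2) coord_closed[OF c] by (intro C.finsum_cong') auto
    finally show ?thesis .
  qed
  then show ?thesis using ps by blast
qed

section \<open>Density of the rational part of *C\<close>

text \<open>f \<circ> proj J is rational and agrees with f on F \<subseteq> C_J.\<close>
theorem rational_dense: "dense_finite_top R C (Rat R C \<Delta> \<epsilon> (dual_rmod R C \<Delta> \<epsilon>))"
  unfolding dense_finite_top_def
proof (intro ballI allI impI)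
  fix f F assume f: "f \<in> ldual R C" and F: "finite F \<and> F \<subseteq> carrier C"
  obtain J where J: "finite J" "J \<subseteq> I" and fixF: "\<forall>c\<in>F. proj J c = c"
    using proj_fixes_finite[of F] F by blast
  obtain ps where ps: "set ps \<subseteq> ldual R C \<times> carrier C"
    and fixed: "\<forall>c\<in>carrier C. dual_basis_map ps (proj J c) = proj J c"
    using proj_dual_basis[OF J] by blast
  define m where "m = (\<lambda>c\<in>carrier C. f (proj J c))"
  have "m \<in> Rat R C \<Delta> \<epsilon> (dual_rmod R C \<Delta> \<epsilon>)"
    unfolding m_def
  proof (rule rational_through_projection[OF f proj_linear hit_proj[OF f J] ps])
    show "dual_basis_map ps (proj J c) = proj J c" if "c \<in> carrier C" for c
      using fixed that by blast
  qed
  moreover have "m c = f c" if "c \<in> F" for c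
    using fixF that F by (auto simp: m_def)
  then have "m \<in> fin_nbhd R C f F"
    unfolding fin_nbhd_def using linear_ldual[OF proj_linear f] by (simp add: m_def)
  ultimately show "fin_nbhd R C f F \<inter> Rat R C \<Delta> \<epsilon> (dual_rmod R C \<Delta> \<epsilon>) \<noteq> {}" by blast
qed

end

theorem corollary2p6:
  fixes R :: "'r ring" and C :: "('r, 'c) bimod"
    and \<Delta> :: "'c \<Rightarrow> ('c \<times> 'c) list" and \<epsilon> :: "'c \<Rightarrow> 'r"
    and I :: "'i set" and D :: "'i \<Rightarrow> 'c set"
  assumes "coring R C \<Delta> \<epsilon>"
    and "left_alpha R C"
    and "internal_direct_sum C I D"
    and "\<forall>i\<in>I. left_subcomodule R C \<Delta> (D i)"
    and "\<forall>i\<in>I. fin_gen_left R C (D i)"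
  shows "dense_finite_top R C (Rat R C \<Delta> \<epsilon> (dual_rmod R C \<Delta> \<epsilon>)) \<and>
    (\<forall>(L :: ('c \<Rightarrow> 'r, 'l) rmodule) (M :: ('c \<Rightarrow> 'r, 'm) rmodule) (N :: ('c \<Rightarrow> 'r, 'n) rmodule) f g.
       right_module (dual_ring R C \<Delta> \<epsilon>) L \<and> right_module (dual_ring R C \<Delta> \<epsilon>) M \<and>
       right_module (dual_ring R C \<Delta> \<epsilon>) N \<and>
       rmod_hom (dual_ring R C \<Delta> \<epsilon>) L M f \<and> rmod_hom (dual_ring R C \<Delta> \<epsilon>) M N g \<and>
       f ` carrier L = {x \<in> carrier M. g x = \<zero>\<^bsub>N\<^esub>}
       \<longrightarrow> f ` Rat R C \<Delta> \<epsilon> L = {x \<in> Rat R C \<Delta> \<epsilon> M. g x = \<zero>\<^bsub>N\<^esub>})"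
proof -
  interpret comodule_decomposition R C \<Delta> \<epsilon> I D
    by (intro comodule_decomposition.intro coring_struct.intro comodule_decomposition_axioms.intro)
      (rule assms)+
  show ?thesis
  proof (intro conjI allI impI)
    show "dense_finite_top R C (Rat R C \<Delta> \<epsilon> (dual_rmod R C \<Delta> \<epsilon>))" by (rule rational_dense)
    fix L :: "('c \<Rightarrow> 'r, 'l) rmodule" and M :: "('c \<Rightarrow> 'r, 'm) rmodule" and N :: "('c \<Rightarrow> 'r, 'n) rmodule"
      and f g
    assume "right_module S L \<and> right_module S M \<and> right_module S N \<and>
       rmod_hom S L M f \<and> rmod_hom S M N g \<and> f ` carrier L = {x \<in> carrier M. g x = \<zero>\<^bsub>N\<^esub>}"
    then show "f ` Rat R C \<Delta> \<epsilon> L = {x \<in> Rat R C \<Delta> \<epsilon> M. g x = \<zero>\<^bsub>N\<^esub>}"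
      using exact_from_dense[OF rational_dense, of L M f g N] by (elim conjE) simp
  qed
qed

end
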